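(* Fix a prime power $q\ge3$ and let $\gamma\in[0,q-1)$ and $\kappa\in[0,\frac{q-1}{q})$. Then for a small $\epsilon\in(0,1)$ and all sufficiently large $n$, with probability at least $1-q^{-n}$, a random $\mathbb{F}_q$-linear insdel code $\mathcal{C}\subseteq\mathbb{F}_q^n$ of rate $$R=1-(2\gamma-\kappa+1)H_q\!\left(\frac{\gamma}{2\gamma-\kappa+1}\right)+\gamma\log_q(q-1)-H_q(\kappa)-\epsilon$$ is list decodable against $\gamma n$ insertions and $\kappa n$ deletions with list size $\exp(O(1/\epsilon))$.
   Context: The alphabet is the finite field $\mathbb{F}_q$. A code $\mathcal{C}\subseteq\mathbb{F}_q^n$ is list decodable against $\gamma n$ insertions and $\kappa n$ deletions with list size $L$ if for every word $\mathbf r$ there are at most $L$ codewords $\mathbf c\in\mathcal{C}$ such that $\mathbf r$ can be obtained from $\mathbf c$ by at most $\gamma n$ insertions and at most $\kappa n$ deletions. A random $\mathbb{F}_q$-linear code of rate $R$ is the $\mathbb{F}_q$-span of $Rn$ linearly independent vectors chosen uniformly at random from $\mathbb{F}_q^n$. $H_q(x)=x\log_q(q-1)-x\log_qx-(1-x)\log_q(1-x)$ for $0<x<1$, $H_q(0)=H_q(1)=0$. *)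

theory Defs
  imports Complex_Main
begin

definition Hq :: "real \<Rightarrow> real \<Rightarrow> real" where
  "Hq q x = (if x = 0 \<or> x = 1 then 0
             else x * log q (q - 1) - x * log q x - (1 - x) * log q (1 - x))"

inductive obtainable :: "'a list \<Rightarrow> nat \<Rightarrow> nat \<Rightarrow> 'a list \<Rightarrow> bool" where
  refl: "obtainable x 0 0 x"
| ins: "obtainable x i d (u @ w) \<Longrightarrow> obtainable x (Suc i) d (u @ a # w)"
| del: "obtainable x i d (u @ a # w) \<Longrightarrow> obtainable x i (Suc d) (u @ w)"

definition list_decodable_insdel :: "'a list set \<Rightarrow> real \<Rightarrow> real \<Rightarrow> real \<Rightarrow> bool" where
  "list_decodable_insdel C ins dels L \<longleftrightarrow>
     (\<forall>r. real (card {c \<in> C. \<exists>i d. real i \<le> ins \<and> real d \<le> dels \<and> obtainable c i d r}) \<le> L)"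

definition lin_indep_vecs :: "nat \<Rightarrow> ('a::field) list list \<Rightarrow> bool" where
  "lin_indep_vecs n vs \<longleftrightarrow>
     (\<forall>c::nat \<Rightarrow> 'a. (\<forall>j<n. (\<Sum>i<length vs. c i * vs ! i ! j) = 0) \<longrightarrow> (\<forall>i<length vs. c i = 0))"

definition span_vecs :: "nat \<Rightarrow> ('a::field) list list \<Rightarrow> 'a list set" where
  "span_vecs n vs = {map (\<lambda>j. \<Sum>i<length vs. c i * vs ! i ! j) [0..<n] | c. True}"

text \<open>The sample space of a random linear code of dimension k in F_q^n:
  k-tuples of linearly independent vectors of F_q^n (chosen uniformly).\<close>
definition indep_tuples :: "nat \<Rightarrow> nat \<Rightarrow> ('a::field) list list set" where
  "indep_tuples n k = {vs. length vs = k \<and> (\<forall>v\<in>set vs. length v = n) \<and> lin_indep_vecs n vs}"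

definition prob_random_linear_code :: "nat \<Rightarrow> nat \<Rightarrow> ('a::{field,finite} list set \<Rightarrow> bool) \<Rightarrow> real" where
  "prob_random_linear_code n k P =
     real (card {vs \<in> (indep_tuples n k :: 'a list list set). P (span_vecs n vs)})
     / real (card (indep_tuples n k :: 'a list list set))"

end

(*
  Fix a received word r and let B(r) be the words of length n from which r arises by at most
  I = \<lfloor>\<gamma> n\<rfloor> insertions and D = \<lfloor>\<kappa> n\<rfloor> deletions. Each word of B(r) shares with r a common
  subsequence of length max (n - D) (|r| - I), so |B(r)| is at most the number of such
  subsequences of r times the number of their supersequences of length n; binomial estimates bound
  this by a constant times q^(n P), where P is the rate loss in the theorem.

  If the code spanned by generators vs puts more than L \<ge> q^t codewords into B(r), the messages
  of these codewords contain m0, m1, ..., mt whose differences to m0 are triangular on t pivot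
  coordinates. Such tuples vs are then determined by t + 1 codewords in B(r) and the k - t
  non-pivot generators, so there are at most |B(r)|^(t+1) q^(n(k-t)) of them. A union bound over
  r and the triangular families, compared with the at least q^(nk)/2 linearly independent tuples
  (this needs q \<ge> 3), gives failure probability q^-n once t \<approx> (q + 3)/\<epsilon>, i.e. for list size
  q^t = exp(O(1/\<epsilon>)).
*)
theory Submission
  imports Defs "HOL-Library.Sublist" "HOL-Library.FuncSet" "HOL-Real_Asymp.Real_Asymp"
begin

section \<open>Insertion--deletion balls\<close>

lemma subseq_remove_elem:
  assumes "subseq s (u @ a # w)"
  shows "\<exists>s'. subseq s' s \<and> subseq s' (u @ w) \<and> length s \<le> Suc (length s')"
proof -
  from assms obtain s1 s2 where s: "s = s1 @ s2" "subseq s1 u" "subseq s2 (a # w)"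
    by (auto elim: subseq_appendE)
  show ?thesis
  proof (cases "subseq s2 w")
    case True
    with s show ?thesis by (intro exI[of _ s]) (auto intro: list_emb_append_mono)
  next
    case False
    with s(3) obtain s2' where "s2 = a # s2'" "subseq s2' w"
      by (cases s2) (auto split: if_splits)
    with s show ?thesis
      by (intro exI[of _ "s1 @ s2'"]) (auto intro: list_emb_append_mono)
  qed
qed

lemma obtainable_imp_common_subseq:
  assumes "obtainable c i d r"
  shows "\<exists>s. subseq s c \<and> subseq s r \<and> length c \<le> length s + d \<and> length r \<le> length s + i"
  using assms
proof (induction rule: obtainable.induct)
  case (refl x)
  show ?case by (intro exI[of _ x]) auto
next
  case (ins x i d u w a)
  then obtain s where s: "subseq s x" "subseq s (u @ w)" "length x \<le> length s + d"
      "length (u @ w) \<le> length s + i"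
    by blast
  have "subseq (u @ w) (u @ a # w)"
    unfolding subseq_append' by (rule list_emb_Cons) simp
  with s show ?case
    by (intro exI[of _ s]) (auto intro: subseq_order.order_trans)
next
  case (del x i d u a w)
  then obtain s where s: "subseq s x" "subseq s (u @ a # w)" "length x \<le> length s + d"
      "length (u @ a # w) \<le> length s + i"
    by blast
  from subseq_remove_elem[OF s(2)] obtain s' where
    s': "subseq s' s" "subseq s' (u @ w)" "length s \<le> Suc (length s')"
    by blast
  with s show ?case
    by (intro exI[of _ s']) (auto intro: subseq_order.order_trans)
qed

definition subseqs_of_length :: "'a list \<Rightarrow> nat \<Rightarrow> 'a list set" where
  "subseqs_of_length r l = {s. subseq s r \<and> length s = l}"

definition supseqs_of_length :: "'a list \<Rightarrow> nat \<Rightarrow> 'a list set" where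
  "supseqs_of_length s n = {c. length c = n \<and> subseq s c}"

lemma finite_subseqs_of_length: "finite (subseqs_of_length r l)"
  by (rule finite_subset[of _ "set (subseqs r)"]) (auto simp: subseqs_of_length_def)

lemma finite_lists_of_length: "finite {c :: 'a::finite list. length c = n}"
  using finite_lists_length_eq[of "UNIV :: 'a set" n] by simp

lemma card_lists_of_length: "card {c :: 'a::finite list. length c = n} = card (UNIV :: 'a set) ^ n"
  using card_lists_length_eq[of "UNIV :: 'a set" n] by simp

lemma finite_supseqs_of_length: "finite (supseqs_of_length (s :: 'a::finite list) n)"
  by (rule finite_subset[OF _ finite_lists_of_length[of n]]) (auto simp: supseqs_of_length_def)

lemma card_subseqs_of_length_Cons_le:
  "card (subseqs_of_length (x # r) (Suc l))
    \<le> card (subseqs_of_length r l) + card (subseqs_of_length r (Suc l))"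
proof -
  have "subseqs_of_length (x # r) (Suc l) \<subseteq> Cons x ` subseqs_of_length r l \<union> subseqs_of_length r (Suc l)"
    by (auto simp: subseqs_of_length_def length_Suc_conv split: if_splits)
  then have "card (subseqs_of_length (x # r) (Suc l))
      \<le> card (Cons x ` subseqs_of_length r l \<union> subseqs_of_length r (Suc l))"
    by (intro card_mono) (auto intro: finite_subseqs_of_length)
  also have "\<dots> \<le> card (Cons x ` subseqs_of_length r l) + card (subseqs_of_length r (Suc l))"
    by (rule card_Un_le)
  finally show ?thesis
    using card_image_le[OF finite_subseqs_of_length, of "Cons x" r l] by linarith
qed

lemma card_supseqs_of_length_Nil:
  "card (supseqs_of_length [] n :: 'a::finite list set) = card (UNIV :: 'a set) ^ n"
  by (simp add: supseqs_of_length_def card_lists_of_length)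

text \<open>A supersequence of \<open>a # s\<close> either starts with \<open>a\<close>, followed by a supersequence of \<open>s\<close>,
  or starts with another letter, followed by a supersequence of \<open>a # s\<close>.\<close>
lemma card_supseqs_of_length_Cons_le:
  "real (card (supseqs_of_length (a # s) (Suc n))) \<le> card (supseqs_of_length s n)
    + (real (card (UNIV :: 'a set)) - 1) * card (supseqs_of_length (a # s :: 'a::finite list) n)"
proof -
  let ?S = "(- {a}) \<times> supseqs_of_length (a # s) n"
  have fin: "finite ?S"
    by (intro finite_cartesian_product finite_supseqs_of_length) auto
  have "supseqs_of_length (a # s) (Suc n) \<subseteq> Cons a ` supseqs_of_length s n \<union> (\<lambda>(x, c). x # c) ` ?S"
    by (auto simp: supseqs_of_length_def length_Suc_conv split: if_splits)
  then have "card (supseqs_of_length (a # s) (Suc n))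
      \<le> card (Cons a ` supseqs_of_length s n \<union> (\<lambda>(x, c). x # c) ` ?S)"
    by (intro card_mono) (auto intro: finite_supseqs_of_length fin)
  also have "\<dots> \<le> card (Cons a ` supseqs_of_length s n) + card ((\<lambda>(x, c). x # c) ` ?S)"
    by (rule card_Un_le)
  also have "\<dots> \<le> card (supseqs_of_length s n) + card ?S"
    by (intro add_mono card_image_le finite_supseqs_of_length fin)
  also have "\<dots> = card (supseqs_of_length s n) + (card (UNIV :: 'a set) - 1) * card (supseqs_of_length (a # s) n)"
    by (simp add: card_cartesian_product Compl_eq_Diff_UNIV card_Diff_singleton)
  finally have "card (supseqs_of_length (a # s) (Suc n))
      \<le> card (supseqs_of_length s n) + (card (UNIV :: 'a set) - 1) * card (supseqs_of_length (a # s) n)" .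
  moreover have "real (card (UNIV :: 'a set) - 1) = real (card (UNIV :: 'a set)) - 1"
    using finite_UNIV_card_ge_0[where 'a='a] by (simp add: of_nat_diff)
  ultimately show ?thesis
    by (metis of_nat_add of_nat_le_iff of_nat_mult)
qed

lemma weighted_power_step:
  fixes A b c :: real
  assumes "0 \<le> A" "0 \<le> b" "A + c * b \<le> A * b"
  shows "A ^ Suc j * b ^ m + c * (A ^ j * b ^ Suc m) \<le> A ^ Suc j * b ^ Suc m"
proof -
  have "A ^ Suc j * b ^ m + c * (A ^ j * b ^ Suc m) = A ^ j * b ^ m * (A + c * b)"
    by (simp add: algebra_simps)
  also have "\<dots> \<le> A ^ j * b ^ m * (A * b)"
    using assms by (intro mult_left_mono) auto
  finally show ?thesis
    by (simp add: algebra_simps)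
qed

text \<open>With \<open>a = 1/p\<close> and \<open>b = 1/(1 - p)\<close> this is the binomial estimate
  \<open>(m choose l) * p ^ (m - l) * (1 - p) ^ l \<le> 1\<close>.\<close>
lemma card_subseqs_of_length_le:
  fixes a b :: real
  assumes ab: "1 \<le> a" "1 \<le> b" "a + b \<le> a * b" and l: "l \<le> length r"
  shows "card (subseqs_of_length r l) \<le> a ^ (length r - l) * b ^ l"
  using l
proof (induction r arbitrary: l)
  case Nil
  then have "subseqs_of_length ([] :: 'a list) l = {[]}"
    by (auto simp: subseqs_of_length_def)
  then show ?case using Nil by simp
next
  case (Cons x r)
  show ?case
  proof (cases l)
    case 0
    then have "subseqs_of_length (x # r) l = {[]}"
      by (auto simp: subseqs_of_length_def)
    then show ?thesis using 0 one_le_power[OF ab(1), of "length (x # r)"] by simp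
  next
    case (Suc l')
    have rec: "real (card (subseqs_of_length (x # r) l))
        \<le> real (card (subseqs_of_length r l')) + real (card (subseqs_of_length r (Suc l')))"
      using card_subseqs_of_length_Cons_le[of x r l'] unfolding Suc by linarith
    have IH1: "card (subseqs_of_length r l') \<le> a ^ (length r - l') * b ^ l'"
      using Cons Suc by simp
    show ?thesis
    proof (cases "l' < length r")
      case True
      then obtain j where j: "length r - l' = Suc j" "length r - Suc l' = j"
        by (metis Suc_diff_Suc)
      have IH2: "card (subseqs_of_length r (Suc l')) \<le> a ^ j * b ^ Suc l'"
        using Cons.IH[of "Suc l'"] True j by simp
      have "a ^ Suc j * b ^ l' + 1 * (a ^ j * b ^ Suc l') \<le> a ^ Suc j * b ^ Suc l'"
        using ab by (intro weighted_power_step) auto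
      moreover have "a ^ (length (x # r) - l) * b ^ l = a ^ Suc j * b ^ Suc l'"
        using Suc j by simp
      ultimately show ?thesis
        using rec IH1[unfolded j(1)] IH2 by linarith
    next
      case False
      then have "subseqs_of_length r (Suc l') = {}" "length r = l'"
        using Cons.prems Suc by (auto simp: subseqs_of_length_def dest: list_emb_length)
      moreover have "b ^ l' \<le> b ^ Suc l'"
        using ab by (intro power_increasing) auto
      ultimately show ?thesis
        using rec IH1 Suc by simp
    qed
  qed
qed

lemma card_supseqs_of_length_le:
  fixes A b :: real
  assumes Ab: "real (card (UNIV :: 'a set)) \<le> A" "1 \<le> b"
    "A + (real (card (UNIV :: 'a set)) - 1) * b \<le> A * b"
    and n: "length s \<le> n"
  shows "card (supseqs_of_length (s :: 'a::finite list) n) \<le> A ^ (n - length s) * b ^ length s"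
  using n
proof (induction n arbitrary: s)
  case 0
  then have "supseqs_of_length s 0 = {[]}"
    by (auto simp: supseqs_of_length_def)
  then show ?case using 0 by simp
next
  case (Suc n)
  define q where "q = real (card (UNIV :: 'a set))"
  have q: "1 \<le> q"
    unfolding q_def using finite_UNIV_card_ge_0[where 'a='a] by simp
  show ?case
  proof (cases s)
    case Nil
    have "q ^ Suc n \<le> A ^ Suc n"
      using Ab q by (intro power_mono) (auto simp: q_def)
    then show ?thesis
      using Nil by (simp add: card_supseqs_of_length_Nil q_def)
  next
    case (Cons a s')
    have rec: "real (card (supseqs_of_length s (Suc n)))
        \<le> real (card (supseqs_of_length s' n)) + (q - 1) * real (card (supseqs_of_length (a # s') n))"
      using card_supseqs_of_length_Cons_le[of a s' n] unfolding Cons q_def .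
    have IH1: "card (supseqs_of_length s' n) \<le> A ^ (n - length s') * b ^ length s'"
      using Suc Cons by simp
    show ?thesis
    proof (cases "length s' < n")
      case True
      then obtain j where j: "n - length s' = Suc j" "n - Suc (length s') = j"
        by (metis Suc_diff_Suc)
      have IH2: "card (supseqs_of_length (a # s') n) \<le> A ^ j * b ^ Suc (length s')"
        using Suc.IH[of "a # s'"] True j by simp
      have q1: "0 \<le> q - 1"
        using q by simp
      have "A ^ Suc j * b ^ length s' + (q - 1) * (A ^ j * b ^ Suc (length s'))
          \<le> A ^ Suc j * b ^ Suc (length s')"
        using Ab q by (intro weighted_power_step) (auto simp: q_def)
      moreover have "A ^ (Suc n - length s) * b ^ length s = A ^ Suc j * b ^ Suc (length s')"
        using Cons j by simp
      ultimately show ?thesis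
        using rec IH1[unfolded j(1)] mult_left_mono[OF IH2 q1] by linarith
    next
      case False
      then have "supseqs_of_length (a # s') n = {}" "length s' = n"
        using Suc.prems Cons by (auto simp: supseqs_of_length_def dest: list_emb_length)
      moreover have "b ^ n \<le> b ^ Suc n"
        using Ab by (intro power_increasing) auto
      ultimately show ?thesis
        using rec IH1 Cons by simp
    qed
  qed
qed

definition insdel_ball :: "'a list \<Rightarrow> nat \<Rightarrow> nat \<Rightarrow> nat \<Rightarrow> 'a list set" where
  "insdel_ball r I D n = {c. length c = n \<and> (\<exists>i d. i \<le> I \<and> d \<le> D \<and> obtainable c i d r)}"

lemma finite_insdel_ball: "finite (insdel_ball r I D n :: 'a::finite list set)"
  by (rule finite_subset[OF _ finite_lists_of_length[of n]]) (auto simp: insdel_ball_def)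

lemma insdel_ball_subset_supseqs:
  assumes "c \<in> insdel_ball r I D n"
  defines "l \<equiv> max (n - D) (length r - I)"
  shows "l \<le> n \<and> l \<le> length r \<and> (\<exists>s \<in> subseqs_of_length r l. c \<in> supseqs_of_length s n)"
proof -
  from assms obtain i d where c: "length c = n" "i \<le> I" "d \<le> D" "obtainable c i d r"
    unfolding insdel_ball_def by blast
  from obtainable_imp_common_subseq[OF c(4)] obtain s where
    s: "subseq s c" "subseq s r" "length c \<le> length s + d" "length r \<le> length s + i"
    by blast
  have "l \<le> length s"
    using s c unfolding l_def by auto
  moreover have "length s \<le> n" "length s \<le> length r"
    using s c by (auto dest: list_emb_length)
  moreover have "subseq (take l s) s"
    by (rule prefix_imp_subseq[OF take_is_prefix])
  then have "subseq (take l s) r" "subseq (take l s) c"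
    using s subseq_order.order_trans by blast+
  ultimately show ?thesis
    using c(1) unfolding subseqs_of_length_def supseqs_of_length_def
    by (intro conjI bexI[of _ "take l s"]) auto
qed

lemma card_insdel_ball_le:
  fixes Y :: real
  assumes "\<And>s. s \<in> subseqs_of_length r (max (n - D) (length r - I)) \<Longrightarrow>
      card (supseqs_of_length (s :: 'a::finite list) n) \<le> Y"
  shows "card (insdel_ball r I D n) \<le> card (subseqs_of_length r (max (n - D) (length r - I))) * Y"
proof -
  define S where "S = subseqs_of_length r (max (n - D) (length r - I))"
  have "card (insdel_ball r I D n) \<le> card (\<Union>s\<in>S. supseqs_of_length s n)"
    using insdel_ball_subset_supseqs unfolding S_def
    by (intro card_mono finite_UN_I finite_subseqs_of_length finite_supseqs_of_length) blast+
  also have "\<dots> \<le> (\<Sum>s\<in>S. card (supseqs_of_length s n))"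
    by (rule card_UN_le) (simp add: S_def finite_subseqs_of_length)
  finally have "real (card (insdel_ball r I D n)) \<le> (\<Sum>s\<in>S. real (card (supseqs_of_length s n)))"
    by (simp flip: of_nat_sum)
  also have "\<dots> \<le> card S * Y"
    using sum_mono[of S _ "\<lambda>_. Y"] assms unfolding S_def by simp
  finally show ?thesis unfolding S_def .
qed

section \<open>Entropy estimates\<close>

definition insdel_rate_loss :: "real \<Rightarrow> real \<Rightarrow> real \<Rightarrow> real" where
  "insdel_rate_loss q \<gamma> \<kappa> =
     (2 * \<gamma> - \<kappa> + 1) * Hq q (\<gamma> / (2 * \<gamma> - \<kappa> + 1)) - \<gamma> * log q (q - 1) + Hq q \<kappa>"

lemma Hq_mult_ln:
  fixes q x :: real
  assumes "1 < q" "0 \<le> x" "x < 1"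
  shows "Hq q x * ln q = x * ln ((q - 1) / x) - (1 - x) * ln (1 - x)"
proof (cases "x = 0")
  case False
  then have "Hq q x * ln q = x * ln (q - 1) - x * ln x - (1 - x) * ln (1 - x)"
    using assms by (simp add: Hq_def log_def field_simps)
  then show ?thesis
    using assms False by (simp add: ln_div algebra_simps)
qed (simp add: Hq_def)

lemma scaled_Hq_mult_ln:
  fixes q g M :: real
  assumes "1 < q" "0 \<le> g" "g < M"
  shows "(M * Hq q (g / M) - g * log q (q - 1)) * ln q = g * ln (M / g) + (M - g) * ln (M / (M - g))"
proof (cases "g = 0")
  case False
  have M: "0 < M" "0 < M - g" "0 < g"
    using assms False by auto
  have h: "Hq q (g / M) * ln q = g / M * ln ((q - 1) / (g / M)) - (1 - g / M) * ln (1 - g / M)"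
    using assms M by (intro Hq_mult_ln) auto
  have l: "log q (q - 1) * ln q = ln (q - 1)"
    using assms by (simp add: log_def)
  have "(M * Hq q (g / M) - g * log q (q - 1)) * ln q
      = M * (Hq q (g / M) * ln q) - g * (log q (q - 1) * ln q)"
    by (simp add: algebra_simps)
  also have "\<dots> = M * (g / M * ln ((q - 1) / (g / M)) - (1 - g / M) * ln (1 - g / M)) - g * ln (q - 1)"
    unfolding h l ..
  also have "\<dots> = g * ln (M / g) + (M - g) * ln (M / (M - g))"
  proof -
    have "ln ((q - 1) / (g / M)) = ln (q - 1) + ln (M / g)"
      using assms M by (simp add: ln_div ln_mult)
    moreover have "1 - g / M = (M - g) / M"
      using M by (simp add: field_simps)
    then have "ln (1 - g / M) = - ln (M / (M - g))"
      using M by (simp add: ln_div)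
    ultimately show ?thesis
      using M by (simp add: field_simps)
  qed
  finally show ?thesis .
qed (simp add: Hq_def)

lemma insdel_rate_loss_mult_ln:
  fixes q \<gamma> \<kappa> :: real
  assumes "1 < q" "0 \<le> \<gamma>" "0 \<le> \<kappa>" "\<kappa> < 1"
  defines "M \<equiv> 2 * \<gamma> - \<kappa> + 1"
  shows "insdel_rate_loss q \<gamma> \<kappa> * ln q
    = \<gamma> * ln (M / \<gamma>) + (M - \<gamma>) * ln (M / (M - \<gamma>)) + Hq q \<kappa> * ln q"
  using scaled_Hq_mult_ln[of q \<gamma> M] assms
  unfolding insdel_rate_loss_def M_def by (simp add: algebra_simps)

lemma mult_ln_div_nonneg: "0 \<le> x \<Longrightarrow> x \<le> (y :: real) \<Longrightarrow> 0 \<le> x * ln (y / x)"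
  by (cases "x = 0") simp_all

lemma Hq_mult_ln_nonneg:
  fixes q x :: real
  assumes "2 \<le> q" "0 \<le> x" "x < 1"
  shows "0 \<le> Hq q x * ln q"
proof -
  have "0 \<le> x * ln ((q - 1) / x)"
    using assms by (intro mult_ln_div_nonneg) auto
  moreover have "(1 - x) * ln (1 - x) \<le> 0"
    using assms by (intro mult_nonneg_nonpos) auto
  ultimately show ?thesis
    using assms by (simp add: Hq_mult_ln)
qed

lemma insdel_rate_loss_nonneg:
  fixes q \<gamma> \<kappa> :: real
  assumes "2 \<le> q" "0 \<le> \<gamma>" "0 \<le> \<kappa>" "\<kappa> < 1"
  shows "0 \<le> insdel_rate_loss q \<gamma> \<kappa>"
proof -
  define M where "M = 2 * \<gamma> - \<kappa> + 1"
  have "0 \<le> \<gamma> * ln (M / \<gamma>)" "0 \<le> (M - \<gamma>) * ln (M / (M - \<gamma>))"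
    using assms unfolding M_def by (intro mult_ln_div_nonneg; simp)+
  then have "0 \<le> insdel_rate_loss q \<gamma> \<kappa> * ln q"
    using Hq_mult_ln_nonneg[of q \<kappa>] insdel_rate_loss_mult_ln[of q \<gamma> \<kappa>] assms
    unfolding M_def by simp
  with assms show ?thesis
    by (simp add: zero_le_mult_iff)
qed

lemma binary_relative_entropy_nonneg:
  fixes y k :: real
  assumes "0 < y" "y < 1" "0 < k" "k < 1"
  shows "0 \<le> y * ln (y / k) + (1 - y) * ln ((1 - y) / (1 - k))"
proof -
  have "y * ln (k / y) \<le> y * (k / y - 1)" "(1 - y) * ln ((1 - k) / (1 - y)) \<le> (1 - y) * ((1 - k) / (1 - y) - 1)"
    using assms by (intro mult_left_mono ln_le_minus_one; simp)+
  moreover have "y * (k / y - 1) + (1 - y) * ((1 - k) / (1 - y) - 1) = 0"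
    using assms by (simp add: field_simps)
  moreover have "ln (k / y) = - ln (y / k)" "ln ((1 - k) / (1 - y)) = - ln ((1 - y) / (1 - k))"
    using assms by (simp_all add: ln_div)
  ultimately show ?thesis by simp
qed

lemma Hq_mult_ln_mono:
  fixes q y k :: real
  assumes "2 \<le> q" "0 \<le> y" "y \<le> k" "k \<le> (q - 1) / q"
  shows "Hq q y * ln q \<le> Hq q k * ln q"
proof -
  have "(q - 1) / q < 1"
    using assms by simp
  then have k1: "k < 1"
    using assms by linarith
  show ?thesis
  proof (cases "y = 0")
    case True
    then show ?thesis
      using assms k1 Hq_mult_ln_nonneg[of q k] by (simp add: Hq_def)
  next
    case False
    have k: "0 < k" "k < 1" "q * k \<le> q - 1"
      using assms False k1 by (auto simp: le_divide_eq mult.commute)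
    have "0 \<le> y * ln (y / k) + (1 - y) * ln ((1 - y) / (1 - k))"
      using assms False k by (intro binary_relative_entropy_nonneg) auto
    then have s1: "y * ln ((q - 1) / y) - (1 - y) * ln (1 - y) \<le> y * ln ((q - 1) / k) - (1 - y) * ln (1 - k)"
      using assms False k by (simp add: ln_div algebra_simps)
    have "0 \<le> ln ((q - 1) * (1 - k) / k)"
      using k by (simp add: field_simps)
    then have "0 \<le> (k - y) * (ln ((q - 1) / k) + ln (1 - k))"
      using assms k by (simp add: ln_div ln_mult)
    then have s2: "y * ln ((q - 1) / k) - (1 - y) * ln (1 - k) \<le> k * ln ((q - 1) / k) - (1 - k) * ln (1 - k)"
      by (simp add: algebra_simps)
    have "Hq q y * ln q = y * ln ((q - 1) / y) - (1 - y) * ln (1 - y)"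
      "Hq q k * ln q = k * ln ((q - 1) / k) - (1 - k) * ln (1 - k)"
      using assms k by (simp_all add: Hq_mult_ln)
    with s1 s2 show ?thesis by linarith
  qed
qed

lemma power_eq_exp_ln: "0 < (x :: real) \<Longrightarrow> x ^ n = exp (real n * ln x)"
  by (simp add: exp_of_nat_mult)

lemma card_subseqs_of_length_le_exp:
  fixes g M :: real
  assumes "0 \<le> g" "g < M" "l \<le> length r" "g = 0 \<Longrightarrow> l = length r"
  shows "card (subseqs_of_length r l) \<le> exp (real (length r - l) * ln (M / g) + l * ln (M / (M - g)))"
proof (cases "g = 0")
  case True
  then have "subseqs_of_length r l \<subseteq> {r}"
    using assms by (auto simp: subseqs_of_length_def dest: subseq_same_length)
  then have "card (subseqs_of_length r l) \<le> 1"
    using card_mono[of "{r}"] by fastforce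
  then show ?thesis
    using True assms by simp
next
  case False
  then have "card (subseqs_of_length r l) \<le> (M / g) ^ (length r - l) * (M / (M - g)) ^ l"
    using assms by (intro card_subseqs_of_length_le) (auto simp: field_simps)
  then show ?thesis
    using assms False by (simp add: exp_add power_eq_exp_ln)
qed

lemma card_supseqs_of_length_le_exp:
  fixes p :: real
  assumes "0 \<le> p" "p \<le> (real (card (UNIV :: 'a set)) - 1) / real (card (UNIV :: 'a set))"
    and "length s \<le> n" "p = 0 \<Longrightarrow> length s = n"
  shows "card (supseqs_of_length (s :: 'a::finite list) n)
    \<le> exp (real (n - length s) * ln ((real (card (UNIV :: 'a set)) - 1) / p) - length s * ln (1 - p))"
proof (cases "p = 0")
  case True
  then have "supseqs_of_length s n \<subseteq> {s}"
    using assms by (auto simp: supseqs_of_length_def dest: subseq_same_length)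
  then have "card (supseqs_of_length s n) \<le> 1"
    using card_mono[of "{s}"] by fastforce
  then show ?thesis
    using True assms by simp
next
  case False
  define q where "q = real (card (UNIV :: 'a set))"
  have q: "0 < q"
    using finite_UNIV_card_ge_0[where 'a='a] by (simp add: q_def)
  have p: "0 < p" "p * q \<le> q - 1"
    using assms False q by (auto simp: q_def le_divide_eq)
  then have p1: "p < 1"
    using q by (smt (verit) mult_le_cancel_right1)
  have A: "0 < (q - 1) / p"
    using p by (smt (verit) divide_pos_pos mult_pos_pos q)
  have "q \<le> (q - 1) / p"
    using p by (simp add: le_divide_eq mult.commute)
  moreover have "1 \<le> 1 / (1 - p)" "(q - 1) / p + (q - 1) * (1 / (1 - p)) \<le> (q - 1) / p * (1 / (1 - p))"
    using p p1 by (simp_all add: field_simps)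
  ultimately have "card (supseqs_of_length s n) \<le> ((q - 1) / p) ^ (n - length s) * (1 / (1 - p)) ^ length s"
    using assms(3) unfolding q_def by (intro card_supseqs_of_length_le)
  also have "\<dots> = exp (real (n - length s) * ln ((q - 1) / p) - length s * ln (1 - p))"
    using A p1 by (simp add: power_eq_exp_ln exp_diff ln_div flip: exp_add)
  finally show ?thesis
    unfolding q_def .
qed

lemma many_deletions_coefficient_nonneg:
  fixes q y k :: real
  assumes y: "0 < y" "y \<le> k" and k: "k < (q - 1) / q" and q: "2 \<le> q"
  shows "0 \<le> ln ((q - 1) / y) - ln ((1 + k - 2 * y) / (1 - y)) + ln (1 - y)"
proof -
  have qk: "q * k < q - 1"
    using k q by (simp add: less_divide_eq mult.commute)
  have "(q - 1) / q < 1"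
    using q by simp
  then have k1: "k < 1"
    using k by linarith
  have pos: "0 < 1 + k - 2 * y"
    using y k1 by simp
  have "0 \<le> (1 - k) * (q - 1 - q * k)"
    using qk k1 by (intro mult_nonneg_nonneg) auto
  moreover have "0 \<le> (k - y) * ((2 * q - 1 + k) - (q + 1) * (y + k))"
  proof -
    have "(q + 1) * (y + k) \<le> (q + 1) * (2 * k)"
      using y q by (intro mult_left_mono) auto
    then show ?thesis
      using y qk k1 by (intro mult_nonneg_nonneg) (auto simp: algebra_simps)
  qed
  moreover have "(q - 1) * (1 - y) ^ 2 - y * (1 + k - 2 * y)
      = (k - y) * ((2 * q - 1 + k) - (q + 1) * (y + k)) + (1 - k) * (q - 1 - q * k)"
    by (simp add: power2_eq_square algebra_simps)
  ultimately have "y * (1 + k - 2 * y) \<le> (q - 1) * (1 - y) ^ 2"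
    by linarith
  then have "1 \<le> (q - 1) * (1 - y) ^ 2 / (y * (1 + k - 2 * y))"
    using y pos by (simp add: le_divide_eq)
  then have "0 \<le> ln ((q - 1) * (1 - y) ^ 2 / (y * (1 + k - 2 * y)))"
    by simp
  also have "\<dots> = ln ((q - 1) / y) - ln ((1 + k - 2 * y) / (1 - y)) + ln (1 - y)"
    using y k1 q pos by (simp add: ln_div ln_mult power2_eq_square)
  finally show ?thesis .
qed

text \<open>For \<open>g = 0\<close> both sides vanish, since \<open>ln 0 = 0\<close> in Isabelle.\<close>
lemma mult_ln_div_right_mono:
  fixes g M x y :: real
  assumes "0 \<le> g" "g \<le> M" "x \<le> y"
  shows "x * ln (M / g) \<le> y * ln (M / g)"
  using assms by (cases "g = 0") (auto intro!: mult_right_mono)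

lemma supseq_exponent_le:
  fixes q \<kappa> \<delta> l n :: real
  assumes q: "2 \<le> q" and \<kappa>: "0 \<le> \<kappa>" "\<kappa> < (q - 1) / q"
    and \<delta>: "0 \<le> \<delta>" "\<delta> \<le> \<kappa> * n" and l: "l + \<delta> = n"
  shows "\<delta> * ln ((q - 1) / \<kappa>) - l * ln (1 - \<kappa>) \<le> n * (Hq q \<kappa> * ln q)"
proof (cases "\<kappa> = 0")
  case False
  have "(q - 1) / q < 1"
    using q by simp
  then have \<kappa>1: "\<kappa> < 1"
    using \<kappa> by linarith
  have "0 \<le> ln ((q - 1) * (1 - \<kappa>) / \<kappa>)"
    using \<kappa> \<kappa>1 False q by (simp add: field_simps)
  then have c: "0 \<le> ln ((q - 1) / \<kappa>) + ln (1 - \<kappa>)"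
    using \<kappa> \<kappa>1 False q by (simp add: ln_div ln_mult)
  have "\<delta> * ln ((q - 1) / \<kappa>) - l * ln (1 - \<kappa>) = - n * ln (1 - \<kappa>) + \<delta> * (ln ((q - 1) / \<kappa>) + ln (1 - \<kappa>))"
    by (simp add: algebra_simps flip: l)
  also have "\<dots> \<le> - n * ln (1 - \<kappa>) + (\<kappa> * n) * (ln ((q - 1) / \<kappa>) + ln (1 - \<kappa>))"
    using \<delta> c by (intro add_left_mono mult_right_mono) auto
  also have "\<dots> = n * (\<kappa> * ln ((q - 1) / \<kappa>) - (1 - \<kappa>) * ln (1 - \<kappa>))"
    by (simp add: algebra_simps)
  also have "\<dots> = n * (Hq q \<kappa> * ln q)"
    using q \<kappa> \<kappa>1 by (subst Hq_mult_ln) auto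
  finally show ?thesis .
qed (use \<delta> l in \<open>simp add: Hq_def\<close>)

lemma insdel_exponent_le_few_deletions:
  fixes q \<gamma> \<kappa> \<iota> \<delta> l n :: real
  assumes q: "2 \<le> q" and \<gamma>: "0 \<le> \<gamma>" and \<kappa>: "0 \<le> \<kappa>" "\<kappa> < (q - 1) / q"
    and \<iota>: "\<iota> \<le> \<gamma> * n" and \<delta>: "0 \<le> \<delta>" "\<delta> \<le> \<kappa> * n" and l: "l + \<delta> = n"
    and few: "\<gamma> = 0 \<or> l \<le> (1 - \<kappa> + \<gamma>) * n + 1"
  defines "M \<equiv> 2 * \<gamma> - \<kappa> + 1"
  shows "\<iota> * ln (M / \<gamma>) + l * ln (M / (M - \<gamma>)) + (\<delta> * ln ((q - 1) / \<kappa>) - l * ln (1 - \<kappa>))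
    \<le> n * (insdel_rate_loss q \<gamma> \<kappa> * ln q) + ln (M / (M - \<gamma>))"
proof -
  have "(q - 1) / q < 1"
    using q by simp
  then have \<kappa>1: "\<kappa> < 1"
    using \<kappa> by linarith
  have M: "M - \<gamma> = 1 - \<kappa> + \<gamma>" "0 < M - \<gamma>"
    using \<gamma> \<kappa>1 unfolding M_def by auto
  have a2: "l * ln (M / (M - \<gamma>)) \<le> (M - \<gamma>) * n * ln (M / (M - \<gamma>)) + ln (M / (M - \<gamma>))"
  proof (cases "\<gamma> = 0")
    case False
    then have lM: "l \<le> (M - \<gamma>) * n + 1"
      using few unfolding M(1) by simp
    have "l * ln (M / (M - \<gamma>)) \<le> ((M - \<gamma>) * n + 1) * ln (M / (M - \<gamma>))"
      by (rule mult_ln_div_right_mono[OF _ _ lM]) (use M \<gamma> in auto)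
    then show ?thesis by (simp add: algebra_simps)
  qed simp
  have E: "insdel_rate_loss q \<gamma> \<kappa> * ln q
      = \<gamma> * ln (M / \<gamma>) + (M - \<gamma>) * ln (M / (M - \<gamma>)) + Hq q \<kappa> * ln q"
    unfolding M_def using q \<gamma> \<kappa> \<kappa>1 by (intro insdel_rate_loss_mult_ln) auto
  have "n * (\<gamma> * ln (M / \<gamma>) + (M - \<gamma>) * ln (M / (M - \<gamma>)) + Hq q \<kappa> * ln q)
      = \<gamma> * n * ln (M / \<gamma>) + (M - \<gamma>) * n * ln (M / (M - \<gamma>)) + n * (Hq q \<kappa> * ln q)"
    by (simp add: algebra_simps)
  then show ?thesis
    using a2 mult_ln_div_right_mono[OF \<gamma> _ \<iota>, of M] supseq_exponent_le[OF q \<kappa> \<delta> l] M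
    unfolding E by linarith
qed

lemma insdel_exponent_le_many_deletions:
  fixes q \<gamma> \<kappa> \<iota> \<delta> l n :: real
  assumes q: "2 \<le> q" and \<gamma>: "0 \<le> \<gamma>" "\<gamma> < \<kappa>" and \<kappa>: "\<kappa> < (q - 1) / q"
    and \<iota>: "\<iota> \<le> \<gamma> * n" and \<delta>: "0 \<le> \<delta>" "\<delta> \<le> (\<kappa> - \<gamma>) * n" and l: "l + \<delta> = n"
  defines "M \<equiv> 2 * \<gamma> - \<kappa> + 1"
  shows "\<iota> * ln (M / \<gamma>) + l * ln (M / (M - \<gamma>)) + (\<delta> * ln ((q - 1) / (\<kappa> - \<gamma>)) - l * ln (1 - (\<kappa> - \<gamma>)))
    \<le> n * (insdel_rate_loss q \<gamma> \<kappa> * ln q)"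
proof -
  define y where "y = \<kappa> - \<gamma>"
  have "(q - 1) / q < 1"
    using q by simp
  then have y: "0 < y" "y \<le> \<kappa>" "y < 1" "\<kappa> < 1"
    using \<gamma> \<kappa> unfolding y_def by auto
  have M: "M - \<gamma> = 1 - y" "M = 1 + \<kappa> - 2 * y" "0 < M"
    using \<gamma> y unfolding M_def y_def by auto
  have n: "0 \<le> n"
    using \<delta> y unfolding y_def by (smt (verit) zero_le_mult_iff)
  define s where "s = ln ((q - 1) / y) - ln (M / (1 - y)) + ln (1 - y)"
  \<comment> \<open>the coefficient of \<open>\<delta>\<close> once \<open>l = n - \<delta>\<close> is substituted\<close>
  have s: "0 \<le> s"
    unfolding s_def M(2) using y \<kappa> q by (intro many_deletions_coefficient_nonneg) auto
  have "\<iota> * ln (M / \<gamma>) + l * ln (M / (M - \<gamma>)) + (\<delta> * ln ((q - 1) / y) - l * ln (1 - y))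
      = \<iota> * ln (M / \<gamma>) + n * (ln (M / (1 - y)) - ln (1 - y)) + \<delta> * s"
    unfolding M(1) s_def by (simp add: algebra_simps flip: l)
  also have "\<dots> \<le> \<gamma> * n * ln (M / \<gamma>) + n * (ln (M / (1 - y)) - ln (1 - y)) + y * n * s"
  proof -
    have "\<iota> * ln (M / \<gamma>) \<le> \<gamma> * n * ln (M / \<gamma>)"
      using \<gamma> \<iota> M y by (intro mult_ln_div_right_mono) auto
    moreover have "\<delta> * s \<le> y * n * s"
      using \<delta> s unfolding y_def by (intro mult_right_mono)
    ultimately show ?thesis by linarith
  qed
  also have "\<dots> = n * (\<gamma> * ln (M / \<gamma>) + (M - \<gamma>) * ln (M / (M - \<gamma>)) + Hq q y * ln q)"
  proof -
    have h: "Hq q y * ln q = y * ln ((q - 1) / y) - (1 - y) * ln (1 - y)"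
      using q y by (intro Hq_mult_ln) auto
    show ?thesis
      unfolding s_def M(1) h by (simp add: algebra_simps)
  qed
  also have "\<dots> \<le> n * (\<gamma> * ln (M / \<gamma>) + (M - \<gamma>) * ln (M / (M - \<gamma>)) + Hq q \<kappa> * ln q)"
    using Hq_mult_ln_mono[of q y \<kappa>] q y \<kappa> n by (intro mult_left_mono) auto
  also have "\<dots> = n * (insdel_rate_loss q \<gamma> \<kappa> * ln q)"
    using insdel_rate_loss_mult_ln[of q \<gamma> \<kappa>] q \<gamma> y unfolding M_def by simp
  finally show ?thesis unfolding y_def .
qed

lemma card_insdel_ball_le_exp:
  fixes g M p :: real and r :: "'a::finite list"
  assumes q: "q = real (card (UNIV :: 'a set))"
    and g: "0 \<le> g" "g < M" and p: "0 \<le> p" "p \<le> (q - 1) / q"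
    and l: "l = max (n - D) (length r - I)" "l \<le> n" "l \<le> length r"
    and degenerate: "g = 0 \<Longrightarrow> l = length r" "p = 0 \<Longrightarrow> l = n"
  shows "card (insdel_ball r I D n)
    \<le> exp (real (length r - l) * ln (M / g) + l * ln (M / (M - g)) + (real (n - l) * ln ((q - 1) / p) - l * ln (1 - p)))"
proof -
  have "card (supseqs_of_length s n) \<le> exp (real (n - l) * ln ((q - 1) / p) - l * ln (1 - p))"
    if "s \<in> subseqs_of_length r l" for s
    using that l p degenerate unfolding q subseqs_of_length_def
    by (intro order.trans[OF card_supseqs_of_length_le_exp]) auto
  then have "card (insdel_ball r I D n)
      \<le> card (subseqs_of_length r l) * exp (real (n - l) * ln ((q - 1) / p) - l * ln (1 - p))"
    unfolding l(1) by (rule card_insdel_ball_le)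
  also have "\<dots> \<le> exp (real (length r - l) * ln (M / g) + l * ln (M / (M - g)))
      * exp (real (n - l) * ln ((q - 1) / p) - l * ln (1 - p))"
    using g l degenerate by (intro mult_right_mono card_subseqs_of_length_le_exp) auto
  finally show ?thesis
    by (simp add: exp_add)
qed

lemma nat_floor_bounds:
  fixes x :: real
  assumes "0 \<le> x"
  shows "real (nat \<lfloor>x\<rfloor>) \<le> x" "x < real (nat \<lfloor>x\<rfloor>) + 1"
  using assms by linarith+

lemma nat_ceiling_bounds:
  fixes x :: real
  shows "x \<le> real (nat \<lceil>x\<rceil>)" "0 < nat \<lceil>x\<rceil> \<Longrightarrow> real (nat \<lceil>x\<rceil>) < x + 1"
  by linarith+

text \<open>The supersequence parameter \<open>p\<close> is \<open>\<kappa> - \<gamma>\<close> when the alignment with \<open>r\<close> uses fewer than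
  \<open>D - I \<approx> (\<kappa> - \<gamma>) * n\<close> deletions, and \<open>\<kappa>\<close> otherwise.\<close>
lemma insdel_exponent_choice:
  fixes \<gamma> \<kappa> q :: real and I D l m n :: nat
  assumes q: "2 \<le> q" and \<gamma>: "0 \<le> \<gamma>" and \<kappa>: "0 \<le> \<kappa>" "\<kappa> < (q - 1) / q"
    and I: "I \<le> \<gamma> * n" "\<gamma> * n < real I + 1" and D: "D \<le> \<kappa> * n" "\<kappa> * n < real D + 1"
    and l: "l = max (n - D) (m - I)" "l \<le> n" "l \<le> m"
  defines "M \<equiv> 2 * \<gamma> - \<kappa> + 1"
  obtains p where "0 \<le> p" "p \<le> (q - 1) / q" "p = 0 \<Longrightarrow> l = n"
    "real (m - l) * ln (M / \<gamma>) + real l * ln (M / (M - \<gamma>))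
       + (real (n - l) * ln ((q - 1) / p) - real l * ln (1 - p))
     \<le> n * (insdel_rate_loss q \<gamma> \<kappa> * ln q) + ln (M / (M - \<gamma>))"
proof -
  have "(q - 1) / q < 1"
    using q by simp
  then have M: "0 < M - \<gamma>" "0 \<le> ln (M / (M - \<gamma>))"
    using \<gamma> \<kappa> unfolding M_def by auto
  have \<iota>: "real (m - l) \<le> \<gamma> * n" and \<delta>: "real (n - l) \<le> \<kappa> * n" "real l + real (n - l) = n"
    using l I D by auto
  show ?thesis
  proof (cases "\<gamma> = 0 \<or> D \<le> (n - l) + I")
    case True
    then have "\<gamma> = 0 \<or> real l \<le> (1 - \<kappa> + \<gamma>) * n + 1"
      using l I D by (auto simp: algebra_simps)
    then have "real (m - l) * ln (M / \<gamma>) + real l * ln (M / (M - \<gamma>))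
        + (real (n - l) * ln ((q - 1) / \<kappa>) - real l * ln (1 - \<kappa>))
        \<le> n * (insdel_rate_loss q \<gamma> \<kappa> * ln q) + ln (M / (M - \<gamma>))"
      unfolding M_def using \<iota> \<delta> by (intro insdel_exponent_le_few_deletions[OF q \<gamma> \<kappa>]) auto
    moreover have "\<kappa> = 0 \<Longrightarrow> l = n"
      using l D by auto
    ultimately show ?thesis
      using \<kappa> by (intro that[of \<kappa>]) auto
  next
    case False
    then have "n - l + I + 1 \<le> D"
      by simp
    then have "real (n - l) + real I + 1 \<le> real D"
      by (metis of_nat_1 of_nat_add of_nat_le_iff)
    then have \<delta>': "real (n - l) \<le> (\<kappa> - \<gamma>) * n" and "\<gamma> * n < \<kappa> * n"
      using I D by (auto simp: algebra_simps)
    from this(2) have "\<gamma> < \<kappa>"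
      by (rule mult_right_less_imp_less) simp
    then have "real (m - l) * ln (M / \<gamma>) + real l * ln (M / (M - \<gamma>))
        + (real (n - l) * ln ((q - 1) / (\<kappa> - \<gamma>)) - real l * ln (1 - (\<kappa> - \<gamma>)))
        \<le> n * (insdel_rate_loss q \<gamma> \<kappa> * ln q) + ln (M / (M - \<gamma>))"
      unfolding M_def using \<iota> \<delta> \<delta>' \<kappa> M
      by (intro order.trans[OF insdel_exponent_le_many_deletions[OF q \<gamma>]]) (auto simp: M_def)
    with \<open>\<gamma> < \<kappa>\<close> show ?thesis
      using \<kappa> \<gamma> by (intro that[of "\<kappa> - \<gamma>"]) auto
  qed
qed

lemma card_insdel_ball_le_rate_loss:
  fixes \<gamma> \<kappa> q :: real and r :: "'a::finite list"
  assumes q: "q = real (card (UNIV :: 'a set))" "2 \<le> q"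
    and \<gamma>: "0 \<le> \<gamma>" and \<kappa>: "0 \<le> \<kappa>" "\<kappa> < (q - 1) / q"
  defines "M \<equiv> 2 * \<gamma> - \<kappa> + 1"
  shows "card (insdel_ball r (nat \<lfloor>\<gamma> * n\<rfloor>) (nat \<lfloor>\<kappa> * n\<rfloor>) n)
    \<le> M / (M - \<gamma>) * q powr (n * insdel_rate_loss q \<gamma> \<kappa>)"
proof -
  define I D where "I = nat \<lfloor>\<gamma> * n\<rfloor>" and "D = nat \<lfloor>\<kappa> * n\<rfloor>"
  define l where "l = max (n - D) (length r - I)"
  define E where "E = n * (insdel_rate_loss q \<gamma> \<kappa> * ln q) + ln (M / (M - \<gamma>))"
  have I: "I \<le> \<gamma> * n" "\<gamma> * n < real I + 1" and D: "D \<le> \<kappa> * n" "\<kappa> * n < real D + 1"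
    unfolding I_def D_def using nat_floor_bounds \<gamma> \<kappa> by (meson of_nat_0_le_iff mult_nonneg_nonneg)+
  have "card (insdel_ball r I D n) \<le> exp E"
  proof (cases "insdel_ball r I D n = {}")
    case False
    then have l: "l \<le> n" "l \<le> length r"
      using insdel_ball_subset_supseqs unfolding l_def by blast+
    have "\<gamma> = 0 \<Longrightarrow> l = length r"
      using l I unfolding l_def by auto
    moreover obtain p where p: "0 \<le> p" "p \<le> (q - 1) / q" "p = 0 \<Longrightarrow> l = n"
      "real (length r - l) * ln (M / \<gamma>) + real l * ln (M / (M - \<gamma>))
         + (real (n - l) * ln ((q - 1) / p) - real l * ln (1 - p)) \<le> E"
      using insdel_exponent_choice[OF q(2) \<gamma> \<kappa> I D l_def l] unfolding E_def M_def by blast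
    moreover have "(q - 1) / q < 1"
      using q by simp
    ultimately have "card (insdel_ball r I D n) \<le> exp (real (length r - l) * ln (M / \<gamma>)
        + real l * ln (M / (M - \<gamma>)) + (real (n - l) * ln ((q - 1) / p) - real l * ln (1 - p)))"
      using \<gamma> \<kappa> l unfolding M_def by (intro card_insdel_ball_le_exp[OF q(1) _ _ _ _ l_def]) auto
    with p(4) show ?thesis
      by (meson exp_le_cancel_iff order_trans)
  qed simp
  also have "exp E = M / (M - \<gamma>) * q powr (n * insdel_rate_loss q \<gamma> \<kappa>)"
  proof -
    have "(q - 1) / q < 1"
      using q by simp
    then have "0 < M / (M - \<gamma>)"
      using \<gamma> \<kappa> unfolding M_def by (auto intro!: divide_pos_pos)
    then show ?thesis
      using q unfolding E_def by (simp add: exp_add powr_def mult_ac)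
  qed
  finally show ?thesis
    unfolding I_def D_def .
qed

section \<open>Random linear codes\<close>

text \<open>Messages are supported on \<open>{..<k}\<close>, so that distinct messages are distinct functions
  and there are exactly \<open>q ^ k\<close> of them.\<close>
definition messages :: "nat \<Rightarrow> (nat \<Rightarrow> 'a) set" where
  "messages k = PiE {..<k} (\<lambda>_. UNIV)"

definition encode :: "nat \<Rightarrow> 'a::field list list \<Rightarrow> (nat \<Rightarrow> 'a) \<Rightarrow> 'a list" where
  "encode n vs m = map (\<lambda>j. \<Sum>i<length vs. m i * vs ! i ! j) [0..<n]"

definition vector_tuples :: "nat \<Rightarrow> nat \<Rightarrow> 'a list list set" where
  "vector_tuples n k = {vs. set vs \<subseteq> {v. length v = n} \<and> length vs = k}"

lemma length_encode [simp]: "length (encode n vs m) = n"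
  by (simp add: encode_def)

lemma nth_encode: "j < n \<Longrightarrow> encode n vs m ! j = (\<Sum>i<length vs. m i * vs ! i ! j)"
  by (simp add: encode_def)

lemma finite_messages: "finite (messages k :: (nat \<Rightarrow> 'a::finite) set)"
  by (simp add: messages_def finite_PiE)

lemma card_messages: "card (messages k :: (nat \<Rightarrow> 'a::finite) set) = card (UNIV :: 'a set) ^ k"
  by (simp add: messages_def card_PiE)

lemma messages_differ: "m \<in> messages k \<Longrightarrow> m' \<in> messages k \<Longrightarrow> m \<noteq> m' \<Longrightarrow> \<exists>i<k. m i \<noteq> m' i"
  unfolding messages_def using PiE_ext by (metis lessThan_iff)

lemma finite_vector_tuples: "finite (vector_tuples n k :: 'a::finite list list set)"
  unfolding vector_tuples_def by (rule finite_lists_length_eq) (simp add: finite_lists_of_length)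

lemma card_vector_tuples:
  "card (vector_tuples n k :: 'a::finite list list set) = (card (UNIV :: 'a set) ^ n) ^ k"
  unfolding vector_tuples_def
  by (subst card_lists_length_eq) (auto simp: finite_lists_of_length card_lists_of_length)

lemma length_nth_vector_tuples:
  assumes "vs \<in> vector_tuples n k" "i < k"
  shows "length (vs ! i) = n"
proof -
  have "vs ! i \<in> set vs"
    using assms by (simp add: vector_tuples_def)
  with assms show ?thesis
    unfolding vector_tuples_def by blast
qed

lemma span_vecs_eq_encode_image:
  assumes "vs \<in> vector_tuples n k"
  shows "span_vecs n vs = encode n vs ` messages k"
proof -
  have "length vs = k"
    using assms by (simp add: vector_tuples_def)
  then have "encode n vs c = encode n vs (restrict c {..<k})" for c
    unfolding encode_def by (intro map_cong refl sum.cong) auto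
  moreover have "restrict c {..<k} \<in> messages k" for c :: "nat \<Rightarrow> 'a"
    by (simp add: messages_def)
  ultimately show ?thesis
    unfolding span_vecs_def encode_def[symmetric] by blast
qed

lemma indep_tuples_eq: "indep_tuples n k = {vs \<in> vector_tuples n k. lin_indep_vecs n vs}"
  by (auto simp: indep_tuples_def vector_tuples_def)

lemma dependent_imp_nth_in_prefix_span:
  assumes vs: "vs \<in> vector_tuples n k" and dep: "\<not> lin_indep_vecs n vs"
  shows "\<exists>i<k. vs ! i \<in> encode n (take i vs) ` messages i"
proof -
  have lvs: "length vs = k"
    using vs by (simp add: vector_tuples_def)
  from dep obtain c where c0: "\<forall>j<n. (\<Sum>i<k. c i * vs ! i ! j) = 0" and c1: "\<exists>i<k. c i \<noteq> 0"
    unfolding lin_indep_vecs_def lvs by blast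
  define i0 where "i0 = Max {i. i < k \<and> c i \<noteq> 0}"
  have "i0 \<in> {i. i < k \<and> c i \<noteq> 0}"
    unfolding i0_def using c1 by (intro Max_in) auto
  then have i0: "i0 < k" "c i0 \<noteq> 0"
    by auto
  have above: "c i = 0" if "i0 < i" "i < k" for i
    using that Max_ge[of "{i. i < k \<and> c i \<noteq> 0}" i] unfolding i0_def by fastforce
  define m where "m = restrict (\<lambda>i. - c i / c i0) {..<i0}"
  have "vs ! i0 = encode n (take i0 vs) m"
  proof (rule nth_equalityI)
    have "length (vs ! i0) = n"
      using vs i0(1) by (rule length_nth_vector_tuples)
    then show "length (vs ! i0) = length (encode n (take i0 vs) m)"
      by simp
  next
    fix j assume "j < length (vs ! i0)"
    then have j: "j < n"
      using length_nth_vector_tuples[OF vs i0(1)] by simp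
    have "(\<Sum>i<k. c i * vs ! i ! j) = (\<Sum>i<Suc i0. c i * vs ! i ! j)"
      using i0 above by (intro sum.mono_neutral_right) auto
    then have "(\<Sum>i<i0. c i * vs ! i ! j) + c i0 * vs ! i0 ! j = 0"
      using c0 j by simp
    then have "vs ! i0 ! j = - (\<Sum>i<i0. c i * vs ! i ! j) / c i0"
      using i0 by (simp add: field_simps eq_neg_iff_add_eq_0)
    also have "\<dots> = (\<Sum>i<i0. (- c i / c i0) * vs ! i ! j)"
      by (simp add: sum_divide_distrib sum_negf)
    also have "\<dots> = encode n (take i0 vs) m ! j"
      using j i0 lvs unfolding m_def by (simp add: nth_encode min_def)
    finally show "vs ! i0 ! j = encode n (take i0 vs) m ! j" .
  qed
  moreover have "m \<in> messages i0"
    by (simp add: m_def messages_def)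
  ultimately show ?thesis
    using i0 by blast
qed

lemma card_nth_in_prefix_span_le:
  assumes i: "i < k"
  shows "card {vs \<in> (vector_tuples n k :: 'a::{field,finite} list list set).
      vs ! i \<in> encode n (take i vs) ` messages i}
    \<le> (card (UNIV :: 'a set) ^ n) ^ (k - 1) * card (UNIV :: 'a set) ^ i"
    (is "card ?X \<le> _")
proof -
  define q where "q = card (UNIV :: 'a set)"
  define T where "T = Sigma (vector_tuples n i) (\<lambda>a. encode n a ` (messages i :: (nat \<Rightarrow> 'a) set))
    \<times> (vector_tuples n (k - Suc i) :: 'a list list set)"
  define glue :: "('a list list \<times> 'a list) \<times> 'a list list \<Rightarrow> 'a list list"
    where "glue = (\<lambda>((a, v), b). a @ v # b)"
  have finT: "finite T"
    unfolding T_def by (intro finite_cartesian_product finite_SigmaI finite_vector_tuples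
        finite_imageI finite_messages)
  have "?X \<subseteq> glue ` T"
  proof
    fix vs assume vs: "vs \<in> ?X"
    then have "take i vs \<in> vector_tuples n i" "drop (Suc i) vs \<in> vector_tuples n (k - Suc i)"
      using i set_take_subset[of i vs] set_drop_subset[of "Suc i" vs] by (auto simp: vector_tuples_def)
    with vs show "vs \<in> glue ` T"
      unfolding T_def glue_def using id_take_nth_drop[of i vs] i
      by (intro image_eqI[where x = "((take i vs, vs ! i), drop (Suc i) vs)"]) (auto simp: vector_tuples_def)
  qed
  then have "card ?X \<le> card (glue ` T)"
    by (rule card_mono[OF finite_imageI[OF finT]])
  also have "\<dots> \<le> card T"
    using finT by (rule card_image_le)
  also have "card T = (\<Sum>a\<in>vector_tuples n i. card (encode n a ` (messages i :: (nat \<Rightarrow> 'a) set)))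
      * card (vector_tuples n (k - Suc i) :: 'a list list set)"
    unfolding T_def
    by (simp add: card_cartesian_product finite_vector_tuples finite_messages)
  also have "\<dots> \<le> (\<Sum>a\<in>(vector_tuples n i :: 'a list list set). q ^ i) * (q ^ n) ^ (k - Suc i)"
  proof -
    have "card (encode n a ` (messages i :: (nat \<Rightarrow> 'a) set)) \<le> q ^ i" for a
      using card_image_le[OF finite_messages, of "encode n a" i] by (simp add: card_messages q_def)
    then show ?thesis
      by (intro mult_mono sum_mono) (auto simp: q_def card_vector_tuples)
  qed
  also have "\<dots> = (q ^ n) ^ (k - 1) * q ^ i"
    using i by (simp add: card_vector_tuples q_def flip: power_add)
  finally show ?thesis
    unfolding q_def .
qed

lemma two_sum_powers_le: "3 \<le> q \<Longrightarrow> 2 * (\<Sum>i<k. q ^ i) \<le> (q :: nat) ^ k"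
proof (induction k)
  case (Suc k)
  have "3 * q ^ k \<le> q * q ^ k"
    using Suc.prems by simp
  with Suc show ?case by (simp, linarith)
qed simp

lemma card_indep_tuples_ge:
  assumes q: "3 \<le> card (UNIV :: 'a::{field,finite} set)" and k: "k \<le> n"
  shows "(card (UNIV :: 'a set) ^ n) ^ k \<le> 2 * card (indep_tuples n k :: 'a list list set)"
proof -
  define q where "q = card (UNIV :: 'a set)"
  define VT V where "VT = (vector_tuples n k :: 'a list list set)" and "V = (indep_tuples n k :: 'a list list set)"
  have V: "V \<subseteq> VT" "finite VT"
    unfolding V_def VT_def indep_tuples_eq by (auto simp: finite_vector_tuples)
  have "VT - V \<subseteq> (\<Union>i<k. {vs \<in> VT. vs ! i \<in> encode n (take i vs) ` messages i})"
  proof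
    fix vs assume vs: "vs \<in> VT - V"
    then have "vs \<in> vector_tuples n k" "\<not> lin_indep_vecs n vs"
      unfolding V_def VT_def indep_tuples_eq by auto
    from dependent_imp_nth_in_prefix_span[OF this] vs
    show "vs \<in> (\<Union>i<k. {vs \<in> VT. vs ! i \<in> encode n (take i vs) ` messages i})"
      by blast
  qed
  then have "card (VT - V) \<le> (\<Sum>i<k. card {vs \<in> VT. vs ! i \<in> encode n (take i vs) ` messages i})"
    using V by (intro order.trans[OF card_mono card_UN_le]) auto
  also have "\<dots> \<le> (\<Sum>i<k. (q ^ n) ^ (k - 1) * q ^ i)"
    unfolding VT_def q_def by (intro sum_mono card_nth_in_prefix_span_le) simp
  also have "\<dots> = (q ^ n) ^ (k - 1) * (\<Sum>i<k. q ^ i)"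
    by (simp add: sum_distrib_left)
  finally have "2 * card (VT - V) \<le> (q ^ n) ^ (k - 1) * (2 * (\<Sum>i<k. q ^ i))"
    by (simp add: mult.left_commute)
  also have "\<dots> \<le> (q ^ n) ^ (k - 1) * q ^ k"
    using q by (simp add: q_def two_sum_powers_le)
  also have "\<dots> \<le> (q ^ n) ^ k"
  proof (cases k)
    case (Suc k')
    have "q ^ k \<le> q ^ n"
      using q k by (simp add: q_def power_increasing)
    then show ?thesis
      using Suc by simp
  qed simp
  finally show ?thesis
    using V card_Diff_subset[OF finite_subset[OF V] V(1)] card_mono[OF V(2) V(1)]
    unfolding V_def VT_def q_def card_vector_tuples by linarith
qed

section \<open>Triangular families of messages\<close>

text \<open>On the pivot coordinates \<open>ps\<close>, the differences \<open>ms ! j - m0\<close> form a triangular matrix with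
  nonzero diagonal; this is what lets the codewords of \<open>m0\<close> and \<open>ms\<close> pin down the generators
  at the pivots.\<close>
definition triangular_family :: "nat \<Rightarrow> (nat \<Rightarrow> 'a) \<Rightarrow> (nat \<Rightarrow> 'a) list \<Rightarrow> nat list \<Rightarrow> bool" where
  "triangular_family k m0 ms ps \<longleftrightarrow> length ms = length ps \<and> distinct ps \<and> set ps \<subseteq> {..<k}
     \<and> (\<forall>l<length ps. (ms ! l) (ps ! l) \<noteq> m0 (ps ! l))
     \<and> (\<forall>j l. j < l \<longrightarrow> l < length ps \<longrightarrow> (ms ! j) (ps ! l) = m0 (ps ! l))"

lemma triangular_family_snoc:
  assumes tri: "triangular_family k m0 ms ps" and p: "p < k" "w p \<noteq> m0 p"
    and agree: "\<forall>m\<in>set ms. m p = m0 p"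
  shows "triangular_family k m0 (ms @ [w]) (ps @ [p])"
proof -
  have len: "length ms = length ps"
    using tri by (simp add: triangular_family_def)
  have "p \<notin> set ps"
  proof
    assume "p \<in> set ps"
    then obtain l where "l < length ps" "ps ! l = p"
      by (metis in_set_conv_nth)
    with tri agree len show False
      unfolding triangular_family_def by (metis nth_mem)
  qed
  with tri p agree len show ?thesis
    unfolding triangular_family_def by (auto simp: nth_append less_Suc_eq)
qed

lemma exists_large_fibre:
  fixes f :: "'b \<Rightarrow> 'a::finite"
  assumes "finite S" "card (UNIV :: 'a set) * N \<le> card S"
  shows "\<exists>a. N \<le> card {x \<in> S. f x = a}"
proof (rule ccontr)
  assume "\<not> ?thesis"
  then have lt: "card {x \<in> S. f x = a} < N" for a
    by (simp add: not_le)
  have small: "card {x \<in> S. f x = a} \<le> N - 1" for a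
    using lt[of a] by (cases N) auto
  have N: "0 < N"
    using lt[of undefined] by (cases N) auto
  have "card S \<le> (\<Sum>a\<in>UNIV. card {x \<in> S. f x = a})"
    by (rule order.trans[OF card_mono card_UN_le]) (auto simp: assms)
  also have "\<dots> \<le> (\<Sum>a\<in>(UNIV :: 'a set). N - 1)"
    by (rule sum_mono) (rule small)
  also have "\<dots> = card (UNIV :: 'a set) * (N - 1)"
    by simp
  also have "\<dots> < card (UNIV :: 'a set) * N"
    using N by (simp add: finite_UNIV_card_ge_0)
  finally show False
    using assms by simp
qed

lemma exists_triangular_family:
  fixes S :: "(nat \<Rightarrow> 'a::finite) set"
  assumes "S \<subseteq> messages k" "card (UNIV :: 'a set) ^ t \<le> card S" "2 \<le> card (UNIV :: 'a set)"
  shows "\<exists>m0 ms ps. m0 \<in> S \<and> set ms \<subseteq> S \<and> length ps = t \<and> triangular_family k m0 ms ps"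
  using assms(1,2)
proof (induction t arbitrary: S)
  case 0
  then obtain m0 where "m0 \<in> S"
    by fastforce
  then show ?case
    by (intro exI[of _ m0] exI[of _ "[]"]) (simp add: triangular_family_def)
next
  case (Suc t)
  have finS: "finite S"
    using Suc.prems(1) finite_messages finite_subset by blast
  have "2 * 1 \<le> card (UNIV :: 'a set) * card (UNIV :: 'a set) ^ t"
    using assms(3) by (intro mult_le_mono) (simp_all add: Suc_leI)
  then have "2 \<le> card S"
    using Suc.prems(2) by simp
  then have "\<not> card S \<le> Suc 0"
    by simp
  then obtain u v where uv: "u \<in> S" "v \<in> S" "u \<noteq> v"
    using card_le_Suc0_iff_eq[OF finS] by blast
  then obtain p where p: "p < k" "u p \<noteq> v p"
    using messages_differ Suc.prems(1) by blast
  obtain a where a: "card (UNIV :: 'a set) ^ t \<le> card {x \<in> S. x p = a}"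
    using exists_large_fibre[OF finS, of "card (UNIV :: 'a set) ^ t" "\<lambda>x. x p"] Suc.prems(2) by auto
  obtain m0 ms ps where IH: "m0 \<in> {x \<in> S. x p = a}" "set ms \<subseteq> {x \<in> S. x p = a}" "length ps = t"
      "triangular_family k m0 ms ps"
    using Suc.IH[OF _ a] Suc.prems(1) by blast
  obtain w where w: "w \<in> S" "w p \<noteq> a"
    using uv p by metis
  have "triangular_family k m0 (ms @ [w]) (ps @ [p])"
    using IH w p by (intro triangular_family_snoc) auto
  with IH w show ?case
    by (intro exI[of _ m0] exI[of _ "ms @ [w]"] exI[of _ "ps @ [p]"]) auto
qed

lemma sum_diff_mult_eq_0_if_encode_eq:
  assumes len: "length vs = k" "length vs' = k" and j: "j < n"
    and eq: "encode n vs m = encode n vs' m" "encode n vs m0 = encode n vs' m0"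
  shows "(\<Sum>i<k. (m i - m0 i) * (vs ! i ! j - vs' ! i ! j)) = 0"
proof -
  have "(\<Sum>i<k. m i * vs ! i ! j) = (\<Sum>i<k. m i * vs' ! i ! j)"
    "(\<Sum>i<k. m0 i * vs ! i ! j) = (\<Sum>i<k. m0 i * vs' ! i ! j)"
    using arg_cong[OF eq(1), of "\<lambda>c. c ! j"] arg_cong[OF eq(2), of "\<lambda>c. c ! j"] len j
    by (simp_all add: nth_encode)
  moreover have "(\<Sum>i<k. (m i - m0 i) * (vs ! i ! j - vs' ! i ! j))
      = (\<Sum>i<k. (m i * vs ! i ! j - m i * vs' ! i ! j) - (m0 i * vs ! i ! j - m0 i * vs' ! i ! j))"
    by (intro sum.cong) (auto simp: algebra_simps)
  ultimately show ?thesis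
    by (simp only: sum_subtractf) simp
qed

lemma triangular_family_pivots_eq:
  assumes vs: "vs \<in> vector_tuples n k" and vs': "vs' \<in> vector_tuples n k"
    and tri: "triangular_family k m0 ms ps"
    and e0: "encode n vs m0 = encode n vs' m0" and es: "\<forall>m\<in>set ms. encode n vs m = encode n vs' m"
    and np: "\<forall>i<k. i \<notin> set ps \<longrightarrow> vs ! i = vs' ! i"
  shows "l < length ps \<Longrightarrow> vs ! (ps ! l) = vs' ! (ps ! l)"
proof (induction l rule: less_induct)
  case (less l)
  define p where "p = ps ! l"
  have p: "p \<in> set ps"
    using less.prems unfolding p_def by simp
  then have p: "p < k" "p \<in> set ps"
    using tri unfolding triangular_family_def by blast+
  have len: "length vs = k" "length vs' = k" "length ms = length ps"
    using vs vs' tri by (auto simp: vector_tuples_def triangular_family_def)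
  show ?case
  proof (rule nth_equalityI)
    show "length (vs ! (ps ! l)) = length (vs' ! (ps ! l))"
      using length_nth_vector_tuples[OF vs p(1)] length_nth_vector_tuples[OF vs' p(1)] p_def by simp
  next
    fix j assume "j < length (vs ! (ps ! l))"
    then have j: "j < n"
      using length_nth_vector_tuples[OF vs p(1)] p_def by simp
    define d x where "d i = (ms ! l) i - m0 i" and "x i = vs ! i ! j - vs' ! i ! j" for i
    have "(\<Sum>i<k. d i * x i) = 0"
      unfolding d_def x_def using len j e0 es less.prems
      by (intro sum_diff_mult_eq_0_if_encode_eq) auto
    moreover have "d i * x i = 0" if i: "i \<in> {..<k} - {p}" for i
    proof (cases "i \<in> set ps")
      case True
      then obtain j' where j': "j' < length ps" "ps ! j' = i"
        by (metis in_set_conv_nth)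
      then have "j' \<noteq> l"
        using i p_def by auto
      then have "vs ! i = vs' ! i \<or> (ms ! l) (ps ! j') = m0 (ps ! j')"
        using less.IH j' tri unfolding triangular_family_def by (metis linorder_neqE_nat)
      then show ?thesis
        unfolding d_def x_def using j' by auto
    qed (use np i x_def in auto)
    ultimately have "d p * x p = 0"
      using p by (simp add: sum.remove[of "{..<k}" p])
    moreover have "d p \<noteq> 0"
      using tri less.prems unfolding triangular_family_def d_def p_def by auto
    ultimately show "vs ! (ps ! l) ! j = vs' ! (ps ! l) ! j"
      unfolding x_def p_def by simp
  qed
qed

lemma triangular_family_encode_eq_imp_eq:
  assumes vs: "vs \<in> vector_tuples n k" "vs' \<in> vector_tuples n k"
    and tri: "triangular_family k m0 ms ps"
    and e: "encode n vs m0 = encode n vs' m0" "\<forall>m\<in>set ms. encode n vs m = encode n vs' m"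
    and np: "\<forall>i<k. i \<notin> set ps \<longrightarrow> vs ! i = vs' ! i"
  shows "vs = vs'"
proof -
  have "vs ! i = vs' ! i" if "i < k" for i
  proof (cases "i \<in> set ps")
    case True
    then obtain l where "l < length ps" "ps ! l = i"
      by (metis in_set_conv_nth)
    then show ?thesis
      using triangular_family_pivots_eq[OF vs tri e np] by blast
  qed (use np that in blast)
  with vs show "vs = vs'"
    by (intro nth_equalityI) (auto simp: vector_tuples_def)
qed

lemma card_encodings_in_le:
  fixes B :: "'a::{field,finite} list set"
  assumes tri: "triangular_family k m0 ms ps" and finB: "finite B"
  shows "card {vs \<in> vector_tuples n k. encode n vs m0 \<in> B \<and> (\<forall>m\<in>set ms. encode n vs m \<in> B)}
    \<le> card B ^ Suc (length ps) * (card (UNIV :: 'a set) ^ n) ^ (k - length ps)"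
    (is "card ?X \<le> _")
proof -
  define NP where "NP = {..<k} - set ps"
  define F where "F vs = (encode n vs m0, map (encode n vs) ms, restrict (\<lambda>i. vs ! i) NP)"
    for vs :: "'a list list"
  define T where "T = B \<times> {ys. set ys \<subseteq> B \<and> length ys = length ps}
    \<times> PiE NP (\<lambda>_. {v :: 'a list. length v = n})"
  have len: "length ms = length ps" "card NP = k - length ps"
    using tri unfolding triangular_family_def NP_def by (auto simp: card_Diff_subset distinct_card)
  have "inj_on F ?X"
  proof (rule inj_onI)
    fix vs vs' assume "vs \<in> ?X" "vs' \<in> ?X" and eq: "F vs = F vs'"
    then have vs: "vs \<in> vector_tuples n k" "vs' \<in> vector_tuples n k"
      by auto
    have e: "encode n vs m0 = encode n vs' m0" "\<forall>m\<in>set ms. encode n vs m = encode n vs' m"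
      and r: "restrict (\<lambda>i. vs ! i) NP = restrict (\<lambda>i. vs' ! i) NP"
      using eq unfolding F_def by (auto simp: map_eq_conv)
    have "\<forall>i<k. i \<notin> set ps \<longrightarrow> vs ! i = vs' ! i"
      using r unfolding NP_def by (metis Diff_iff lessThan_iff restrict_apply')
    then show "vs = vs'"
      by (rule triangular_family_encode_eq_imp_eq[OF vs tri e])
  qed
  moreover have "F ` ?X \<subseteq> T"
  proof (rule image_subsetI)
    fix vs assume vs: "vs \<in> ?X"
    then have "restrict (\<lambda>i. vs ! i) NP \<in> PiE NP (\<lambda>_. {v. length v = n})"
      using length_nth_vector_tuples[of vs n k] by (simp add: NP_def)
    with vs show "F vs \<in> T"
      using len(1) unfolding F_def T_def by auto
  qed
  moreover have "finite T"
    unfolding T_def by (intro finite_cartesian_product finite_lists_length_eq finB finite_PiE)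
      (auto simp: finite_lists_of_length NP_def)
  ultimately have "card ?X \<le> card T"
    by (rule card_inj_on_le)
  also have "card T = card B ^ Suc (length ps) * (card (UNIV :: 'a set) ^ n) ^ (k - length ps)"
    unfolding T_def using finB len(2)
    by (simp add: card_cartesian_product card_lists_length_eq card_PiE NP_def card_lists_of_length)
  finally show ?thesis .
qed

section \<open>Counting bad generator tuples\<close>

definition bad_tuples :: "nat \<Rightarrow> nat \<Rightarrow> nat \<Rightarrow> nat \<Rightarrow> real \<Rightarrow> 'a::field list list set" where
  "bad_tuples n k I D L =
     {vs \<in> vector_tuples n k. \<exists>r. L < card (span_vecs n vs \<inter> insdel_ball r I D n)}"

definition triangular_families :: "nat \<Rightarrow> nat \<Rightarrow> ((nat \<Rightarrow> 'a) \<times> (nat \<Rightarrow> 'a) list \<times> nat list) set" where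
  "triangular_families k t = {(m0, ms, ps). m0 \<in> messages k \<and> set ms \<subseteq> messages k \<and> length ps = t
     \<and> triangular_family k m0 ms ps}"

lemma triangular_families_subset:
  "triangular_families k t \<subseteq> messages k \<times> {ms. set ms \<subseteq> messages k \<and> length ms = t}
     \<times> {ps. set ps \<subseteq> {..<k} \<and> length ps = t}"
  by (auto simp: triangular_families_def triangular_family_def)

lemma finite_triangular_families: "finite (triangular_families k t :: ((nat \<Rightarrow> 'a::finite) \<times> _) set)"
proof -
  have "finite (messages k \<times> {ms. set ms \<subseteq> messages k \<and> length ms = t} \<times> {ps. set ps \<subseteq> {..<k} \<and> length ps = t}
      :: ((nat \<Rightarrow> 'a) \<times> (nat \<Rightarrow> 'a) list \<times> nat list) set)"
    by (intro finite_cartesian_product finite_lists_length_eq finite_messages finite_lessThan)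
  then show ?thesis
    by (rule finite_subset[OF triangular_families_subset])
qed

lemma card_triangular_families_le:
  "card (triangular_families k t :: ((nat \<Rightarrow> 'a::finite) \<times> _) set)
    \<le> card (UNIV :: 'a set) ^ k * (card (UNIV :: 'a set) ^ k) ^ t * k ^ t"
proof -
  let ?T = "messages k \<times> {ms. set ms \<subseteq> messages k \<and> length ms = t} \<times> {ps. set ps \<subseteq> {..<k} \<and> length ps = t}
    :: ((nat \<Rightarrow> 'a) \<times> (nat \<Rightarrow> 'a) list \<times> nat list) set"
  have "finite ?T"
    by (intro finite_cartesian_product finite_lists_length_eq finite_messages finite_lessThan)
  then have "card (triangular_families k t :: ((nat \<Rightarrow> 'a) \<times> _) set) \<le> card ?T"
    by (rule card_mono[OF _ triangular_families_subset])
  also have "card ?T = card (UNIV :: 'a set) ^ k * (card (UNIV :: 'a set) ^ k) ^ t * k ^ t"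
    by (simp add: finite_messages card_messages card_cartesian_product card_lists_length_eq)
  finally show ?thesis .
qed

lemma triangular_families_empty:
  assumes "k < t"
  shows "triangular_families k t = {}"
proof -
  have "t \<le> k" if "triangular_family k m0 ms ps" "length ps = t" for m0 ms ps
  proof -
    have "distinct ps" "set ps \<subseteq> {..<k}"
      using that(1) by (auto simp: triangular_family_def)
    then show ?thesis
      using that(2) card_mono[of "{..<k}" "set ps"] by (simp add: distinct_card)
  qed
  with assms show ?thesis
    by (auto simp: triangular_families_def)
qed

lemma card_lists_length_le_power:
  assumes "3 \<le> card (UNIV :: 'a::finite set)"
  shows "card {r :: 'a list. length r \<le> N} \<le> card (UNIV :: 'a set) ^ Suc N"
  using card_lists_length_le[of "UNIV :: 'a set" N] two_sum_powers_le[OF assms, of "Suc N"]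
  by (simp add: lessThan_Suc_atMost)

lemma bad_tuple_witness:
  fixes L :: real and vs :: "'a::{field,finite} list list"
  assumes vs: "vs \<in> bad_tuples n k I D L"
    and q: "2 \<le> card (UNIV :: 'a set)" and L: "card (UNIV :: 'a set) ^ t \<le> L"
  obtains r m0 ms ps where "length r \<le> n + I" "(m0, ms, ps) \<in> triangular_families k t"
    "encode n vs m0 \<in> insdel_ball r I D n" "\<forall>m\<in>set ms. encode n vs m \<in> insdel_ball r I D n"
proof -
  from vs obtain r where VT: "vs \<in> vector_tuples n k"
    and r: "L < card (span_vecs n vs \<inter> insdel_ball r I D n)"
    unfolding bad_tuples_def by blast
  define S where "S = {m \<in> messages k. encode n vs m \<in> insdel_ball r I D n}"
  have finS: "finite S"
    unfolding S_def by (rule finite_subset[OF _ finite_messages]) blast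
  have "span_vecs n vs \<inter> insdel_ball r I D n \<subseteq> encode n vs ` S"
    using span_vecs_eq_encode_image[OF VT] by (auto simp: S_def)
  then have "card (span_vecs n vs \<inter> insdel_ball r I D n) \<le> card S"
    using finS by (meson card_image_le card_mono finite_imageI order_trans)
  then have "real (card (span_vecs n vs \<inter> insdel_ball r I D n)) \<le> real (card S)"
    by (rule of_nat_mono)
  then have "real (card (UNIV :: 'a set) ^ t) < real (card S)"
    using r L by linarith
  then have "card (UNIV :: 'a set) ^ t \<le> card S"
    by simp
  then obtain m0 ms ps where ex: "m0 \<in> S" "set ms \<subseteq> S" "length ps = t" "triangular_family k m0 ms ps"
    using exists_triangular_family[of S k t] q by (auto simp: S_def)
  then obtain c i d where "length c = n" "i \<le> I" "obtainable c i d r"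
    unfolding S_def insdel_ball_def by blast
  then have "length r \<le> n + I"
    using obtainable_imp_common_subseq by (fastforce dest: list_emb_length)
  with ex show ?thesis
    using that unfolding S_def triangular_families_def by blast
qed

lemma card_encodings_in_ball_le:
  fixes Bm :: real
  assumes tri: "triangular_family k m0 ms ps" and t: "length ps = t"
    and Bm: "card (insdel_ball r I D n :: 'a::{field,finite} list set) \<le> Bm"
  shows "card {vs \<in> vector_tuples n k. encode n vs m0 \<in> insdel_ball r I D n
      \<and> (\<forall>m\<in>set ms. encode n vs m \<in> insdel_ball r I D n)}
    \<le> Bm ^ Suc t * (card (UNIV :: 'a set) ^ n) ^ (k - t)"
proof -
  have "real (card {vs \<in> vector_tuples n k. encode n vs m0 \<in> insdel_ball r I D n
      \<and> (\<forall>m\<in>set ms. encode n vs m \<in> insdel_ball r I D n)})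
      \<le> real (card (insdel_ball r I D n)) ^ Suc t * (card (UNIV :: 'a set) ^ n) ^ (k - t)"
    using of_nat_mono[OF card_encodings_in_le[OF tri finite_insdel_ball], where 'a=real] t by simp
  also have "\<dots> \<le> Bm ^ Suc t * (card (UNIV :: 'a set) ^ n) ^ (k - t)"
    using Bm by (intro mult_right_mono power_mono) auto
  finally show ?thesis .
qed

lemma bad_tuples_empty:
  fixes L :: real
  assumes "2 \<le> card (UNIV :: 'a::{field,finite} set)" "card (UNIV :: 'a set) ^ t \<le> L" "k < t"
  shows "(bad_tuples n k I D L :: 'a list list set) = {}"
  using bad_tuple_witness[OF _ assms(1,2)] triangular_families_empty[OF assms(3)] by blast

lemma card_bad_tuples_le:
  fixes Bm L :: real
  assumes q: "2 \<le> card (UNIV :: 'a::{field,finite} set)" and L: "card (UNIV :: 'a set) ^ t \<le> L"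
    and Bm: "\<And>r. card (insdel_ball (r :: 'a list) I D n) \<le> Bm"
  shows "card (bad_tuples n k I D L :: 'a list list set)
    \<le> card {r :: 'a list. length r \<le> n + I} * card (triangular_families k t :: ((nat \<Rightarrow> 'a) \<times> _) set)
      * (Bm ^ Suc t * (card (UNIV :: 'a set) ^ n) ^ (k - t))"
proof -
  define R where "R = {r :: 'a list. length r \<le> n + I}"
  define TF where "TF = (triangular_families k t :: ((nat \<Rightarrow> 'a) \<times> _) set)"
  define A where "A r st = {vs \<in> (vector_tuples n k :: 'a list list set). encode n vs (fst st) \<in> insdel_ball r I D n
    \<and> (\<forall>m\<in>set (fst (snd st)). encode n vs m \<in> insdel_ball r I D n)}"
    for r :: "'a list" and st :: "(nat \<Rightarrow> 'a) \<times> (nat \<Rightarrow> 'a) list \<times> nat list"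
  have fin: "finite R" "finite TF"
    unfolding R_def TF_def using finite_lists_length_le[of "UNIV :: 'a set"]
    by (simp_all add: finite_triangular_families)
  have cover: "bad_tuples n k I D L \<subseteq> (\<Union>r\<in>R. \<Union>st\<in>TF. A r st)"
  proof
    fix vs :: "'a list list"
    assume vs: "vs \<in> bad_tuples n k I D L"
    then obtain r m0 ms ps where "length r \<le> n + I" "(m0, ms, ps) \<in> TF"
      "encode n vs m0 \<in> insdel_ball r I D n" "\<forall>m\<in>set ms. encode n vs m \<in> insdel_ball r I D n"
      using bad_tuple_witness[OF vs q L] unfolding TF_def by metis
    with vs show "vs \<in> (\<Union>r\<in>R. \<Union>st\<in>TF. A r st)"
      unfolding R_def A_def bad_tuples_def by force
  qed
  have finA: "finite (A r st)" for r st
    unfolding A_def by (rule finite_subset[OF _ finite_vector_tuples]) blast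
  have cardA: "card (A r st) \<le> Bm ^ Suc t * (card (UNIV :: 'a set) ^ n) ^ (k - t)"
    if TF: "st \<in> TF" for r st
  proof -
    obtain m0 ms ps where st: "st = (m0, ms, ps)" "length ps = t" "triangular_family k m0 ms ps"
      using TF unfolding TF_def triangular_families_def by auto
    show ?thesis
      using card_encodings_in_ball_le[OF st(3,2) Bm[of r]] unfolding A_def st(1) by simp
  qed
  have "card (bad_tuples n k I D L :: 'a list list set) \<le> card (\<Union>r\<in>R. \<Union>st\<in>TF. A r st)"
    using cover fin finA by (intro card_mono finite_UN_I) auto
  also have "\<dots> \<le> (\<Sum>r\<in>R. \<Sum>st\<in>TF. card (A r st))"
    using fin by (intro order.trans[OF card_UN_le] sum_mono card_UN_le) auto
  finally have "real (card (bad_tuples n k I D L :: 'a list list set)) \<le> (\<Sum>r\<in>R. \<Sum>st\<in>TF. real (card (A r st)))"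
    by (simp flip: of_nat_sum)
  also have "\<dots> \<le> (\<Sum>r\<in>R. \<Sum>st\<in>TF. Bm ^ Suc t * (card (UNIV :: 'a set) ^ n) ^ (k - t))"
    using cardA by (intro sum_mono) auto
  finally show ?thesis
    unfolding R_def TF_def by simp
qed

lemma not_list_decodable_imp_bad_tuple:
  fixes \<gamma> \<kappa> L :: real
  assumes vs: "vs \<in> vector_tuples n k" and \<gamma>: "0 \<le> \<gamma>" and \<kappa>: "0 \<le> \<kappa>"
    and not_ld: "\<not> list_decodable_insdel (span_vecs n vs) (\<gamma> * n) (\<kappa> * n) L"
  shows "vs \<in> bad_tuples n k (nat \<lfloor>\<gamma> * n\<rfloor>) (nat \<lfloor>\<kappa> * n\<rfloor>) L"
proof -
  from not_ld obtain r where
    r: "L < card {c \<in> span_vecs n vs. \<exists>i d. real i \<le> \<gamma> * n \<and> real d \<le> \<kappa> * n \<and> obtainable c i d r}"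
    unfolding list_decodable_insdel_def by (auto simp: not_le)
  have "real i \<le> x \<longleftrightarrow> i \<le> nat \<lfloor>x\<rfloor>" if "0 \<le> x" for i and x :: real
    using that by (simp add: le_nat_iff le_floor_iff)
  then have "{c \<in> span_vecs n vs. \<exists>i d. real i \<le> \<gamma> * n \<and> real d \<le> \<kappa> * n \<and> obtainable c i d r}
      = span_vecs n vs \<inter> insdel_ball r (nat \<lfloor>\<gamma> * n\<rfloor>) (nat \<lfloor>\<kappa> * n\<rfloor>) n"
    using \<gamma> \<kappa> by (auto simp: insdel_ball_def span_vecs_def)
  with r vs show ?thesis
    unfolding bad_tuples_def by auto
qed

lemma prob_list_decodable_ge:
  fixes \<gamma> \<kappa> L :: real and n k :: nat
  defines "q \<equiv> card (UNIV :: 'a::{field,finite} set)"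
    and "B \<equiv> bad_tuples n k (nat \<lfloor>\<gamma> * n\<rfloor>) (nat \<lfloor>\<kappa> * n\<rfloor>) L :: 'a list list set"
  assumes q: "3 \<le> q" and \<gamma>: "0 \<le> \<gamma>" and \<kappa>: "0 \<le> \<kappa>" and k: "k \<le> n"
    and few_bad: "2 * q ^ n * card B \<le> (q ^ n) ^ k"
  shows "1 - real q powr (- real n)
    \<le> prob_random_linear_code n k (\<lambda>C :: 'a list set. list_decodable_insdel C (\<gamma> * n) (\<kappa> * n) L)"
proof -
  define V where "V = (indep_tuples n k :: 'a list list set)"
  define G where "G = {vs \<in> V. list_decodable_insdel (span_vecs n vs) (\<gamma> * n) (\<kappa> * n) L}"
  have fin: "finite V" "G \<subseteq> V" "finite B"
    unfolding V_def G_def B_def bad_tuples_def indep_tuples_eq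
    by (auto intro: finite_subset[OF _ finite_vector_tuples])
  have "V - G \<subseteq> B"
    unfolding V_def G_def B_def indep_tuples_eq
    using not_list_decodable_imp_bad_tuple[OF _ \<gamma> \<kappa>] by blast
  then have "card V \<le> card G + card B"
    using fin card_mono[of B "V - G"] card_Diff_subset[of G V] finite_subset by fastforce
  then have g: "real (card V) - real (card B) \<le> real (card G)"
    by linarith
  have "(q ^ n) ^ k \<le> 2 * card V"
    using card_indep_tuples_ge[OF q[unfolded q_def] k] unfolding q_def V_def .
  moreover have "0 < (q ^ n) ^ k"
    using q by simp
  ultimately have v: "0 < card V" and "q ^ n * card B \<le> card V"
    using few_bad by linarith+
  then have b: "real (card B) * real q ^ n \<le> real (card V)"
    by (metis mult.commute of_nat_le_iff of_nat_mult of_nat_power)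
  have "1 - 1 / real q ^ n \<le> 1 - real (card B) / real (card V)"
    using b v q by (simp add: field_simps)
  also have "\<dots> = (real (card V) - real (card B)) / real (card V)"
    using v by (simp add: field_simps)
  also have "\<dots> \<le> real (card G) / real (card V)"
    using g by (intro divide_right_mono) auto
  finally have "1 - 1 / real q ^ n \<le> real (card G) / real (card V)" .
  moreover have "real q powr (- real n) = 1 / real q ^ n"
    using q by (simp add: powr_minus powr_realpow divide_inverse)
  ultimately show ?thesis
    unfolding prob_random_linear_code_def G_def V_def by simp
qed

section \<open>The rate bound\<close>

text \<open>Exponent of \<open>q\<close> in the union bound: the slack \<open>(t + 1) * eps * n\<close> gained from the rate
  pays for the surplus \<open>3 * n + I \<le> (q + 2) * n\<close> coming from the target probability \<open>q ^ - n\<close>,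
  the received word and the base codeword \<open>m0\<close>.\<close>
lemma bad_tuples_exponent_le:
  fixes q P eps :: real and n k t I :: nat
  assumes I: "real I \<le> (q - 1) * n" and tk: "t \<le> k"
    and k: "real k \<le> (1 - P - eps) * n + 1" and t: "q + 3 \<le> (t + 1) * eps"
  shows "real (n + Suc (n + I) + k * Suc t + n * (k - t)) + Suc t * (n * P)
    \<le> real n * real k - real n + real t + 2"
proof -
  have "real k + n * P \<le> (1 - eps) * n + 1"
    using k by (simp add: algebra_simps)
  then have "Suc t * (real k + n * P) \<le> Suc t * ((1 - eps) * n + 1)"
    by (intro mult_left_mono) auto
  moreover have "(q + 3) * n \<le> (t + 1) * eps * n"
    using t by (intro mult_right_mono) auto
  moreover have "real (n * (k - t)) = real n * real k - real n * real t"
    using tk by (simp add: of_nat_diff algebra_simps)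
  ultimately show ?thesis
    using I by (simp add: algebra_simps)
qed

lemma bad_tuples_bound_arith:
  fixes q K P eps :: real and n k t I :: nat
  assumes q: "3 \<le> q" and I: "real I \<le> (q - 1) * n" and tk: "t \<le> k" "k \<le> n"
    and k: "real k \<le> (1 - P - eps) * n + 1" and t: "q + 3 \<le> (t + 1) * eps" and K: "0 \<le> K"
    and big: "2 * K ^ Suc t * q ^ (t + 2) * real n ^ t \<le> q ^ n"
  shows "2 * q ^ n * (q ^ Suc (n + I) * (q ^ k * (q ^ k) ^ t * real k ^ t)
      * ((K * q powr (n * P)) ^ Suc t * (q ^ n) ^ (k - t))) \<le> (q ^ n) ^ k"
proof -
  have q0: "0 < q"
    using q by simp
  define X where "X = real (n + Suc (n + I) + k * Suc t + n * (k - t)) + Suc t * (n * P)"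
  have "X \<le> real n * real k - real n + real t + 2"
    unfolding X_def using I tk(1) k t by (rule bad_tuples_exponent_le)
  then have "q powr X * q ^ n \<le> q powr (real n * real k - real n + real t + 2) * q ^ n"
    using q by (intro mult_right_mono powr_mono) auto
  also have "\<dots> = q powr real (n * k + (t + 2))"
    using q0 by (simp add: powr_realpow[symmetric] powr_add[symmetric] algebra_simps)
  also have "\<dots> = q ^ (t + 2) * (q ^ n) ^ k"
    using q0 by (simp only: powr_realpow) (simp add: power_add power_mult)
  finally have X: "q powr X * q ^ n \<le> q ^ (t + 2) * (q ^ n) ^ k" .
  have "q ^ n * q ^ Suc (n + I) * (q ^ k * (q ^ k) ^ t) * (q ^ n) ^ (k - t)
      = q ^ (n + Suc (n + I) + k * Suc t + n * (k - t))"
    by (simp add: power_add power_mult)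
  also have "\<dots> = q powr real (n + Suc (n + I) + k * Suc t + n * (k - t))"
    using q0 by (simp only: powr_realpow)
  finally have e1: "q ^ n * q ^ Suc (n + I) * (q ^ k * (q ^ k) ^ t) * (q ^ n) ^ (k - t)
      = q powr real (n + Suc (n + I) + k * Suc t + n * (k - t))" .
  have e2: "(K * q powr (n * P)) ^ Suc t = K ^ Suc t * q powr (Suc t * (n * P))"
    using q0 by (simp only: power_mult_distrib powr_power[of q])
  have "2 * q ^ n * (q ^ Suc (n + I) * (q ^ k * (q ^ k) ^ t * real k ^ t)
      * ((K * q powr (n * P)) ^ Suc t * (q ^ n) ^ (k - t)))
      = 2 * real k ^ t * K ^ Suc t * (q ^ n * q ^ Suc (n + I) * (q ^ k * (q ^ k) ^ t) * (q ^ n) ^ (k - t))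
        * q powr (Suc t * (n * P))"
    unfolding e2 by (simp only: mult_ac)
  also have "\<dots> = 2 * real k ^ t * K ^ Suc t * q powr X"
    unfolding e1 X_def by (simp add: powr_add)
  finally have lhs: "2 * q ^ n * (q ^ Suc (n + I) * (q ^ k * (q ^ k) ^ t * real k ^ t)
      * ((K * q powr (n * P)) ^ Suc t * (q ^ n) ^ (k - t))) = 2 * real k ^ t * K ^ Suc t * q powr X" .
  have "real k ^ t \<le> real n ^ t"
    using tk by (intro power_mono) auto
  then have "(2 * real k ^ t * K ^ Suc t) * (q powr X * q ^ n)
      \<le> (2 * real n ^ t * K ^ Suc t) * (q ^ (t + 2) * (q ^ n) ^ k)"
    using X K q0 by (intro mult_mono[OF _ X] mult_right_mono) auto
  also have "\<dots> = (2 * K ^ Suc t * q ^ (t + 2) * real n ^ t) * (q ^ n) ^ k"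
    by (simp only: mult_ac)
  also have "\<dots> \<le> q ^ n * (q ^ n) ^ k"
    using big q0 by (intro mult_right_mono) auto
  finally show ?thesis
    unfolding lhs using q0 by (simp add: mult_ac)
qed

lemma card_bad_tuples_le_powers:
  fixes Bm L :: real
  defines "q \<equiv> real (card (UNIV :: 'a::{field,finite} set))"
  assumes q3: "3 \<le> card (UNIV :: 'a set)" and L: "q ^ t \<le> L"
    and Bm: "\<And>r. card (insdel_ball (r :: 'a list) I D n) \<le> Bm"
  shows "card (bad_tuples n k I D L :: 'a list list set)
    \<le> q ^ Suc (n + I) * (q ^ k * (q ^ k) ^ t * real k ^ t) * (Bm ^ Suc t * (q ^ n) ^ (k - t))"
proof -
  have "card {r :: 'a list. length r \<le> n + I} \<le> card (UNIV :: 'a set) ^ Suc (n + I)"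
    using q3 by (rule card_lists_length_le_power)
  then have R: "real (card {r :: 'a list. length r \<le> n + I}) \<le> q ^ Suc (n + I)"
    unfolding q_def by (metis of_nat_le_iff of_nat_power)
  have TF: "real (card (triangular_families k t :: ((nat \<Rightarrow> 'a) \<times> _) set)) \<le> q ^ k * (q ^ k) ^ t * real k ^ t"
    using of_nat_mono[OF card_triangular_families_le[where 'a='a, of k t], where 'a=real]
    unfolding q_def by simp
  have "0 \<le> Bm"
    using Bm[of "[]"] by linarith
  then have "0 \<le> Bm ^ Suc t * (q ^ n) ^ (k - t)"
    unfolding q_def by simp
  then have "real (card {r :: 'a list. length r \<le> n + I})
      * real (card (triangular_families k t :: ((nat \<Rightarrow> 'a) \<times> _) set)) * (Bm ^ Suc t * (q ^ n) ^ (k - t))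
      \<le> q ^ Suc (n + I) * (q ^ k * (q ^ k) ^ t * real k ^ t) * (Bm ^ Suc t * (q ^ n) ^ (k - t))"
    by (intro mult_right_mono mult_mono R TF) (auto simp: q_def)
  moreover have "real (card (bad_tuples n k I D L :: 'a list list set))
      \<le> real (card {r :: 'a list. length r \<le> n + I})
        * real (card (triangular_families k t :: ((nat \<Rightarrow> 'a) \<times> _) set)) * (Bm ^ Suc t * (q ^ n) ^ (k - t))"
  proof -
    have q2: "2 \<le> card (UNIV :: 'a set)" and L': "real (card (UNIV :: 'a set) ^ t) \<le> L"
      using q3 L unfolding q_def by simp_all
    show ?thesis
      using card_bad_tuples_le[OF q2 L' Bm, of k] unfolding q_def by simp
  qed
  ultimately show ?thesis
    by linarith
qed

lemma card_bad_tuples_small: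
  fixes \<gamma> \<kappa> eps L :: real and n k t :: nat
  defines "q \<equiv> real (card (UNIV :: 'a::{field,finite} set))" and "M \<equiv> 2 * \<gamma> - \<kappa> + 1"
  assumes q: "3 \<le> q" and \<gamma>: "0 \<le> \<gamma>" "\<gamma> < q - 1" and \<kappa>: "0 \<le> \<kappa>" "\<kappa> < (q - 1) / q"
    and t: "0 < t" "q + 3 \<le> (t + 1) * eps" and L: "q ^ t \<le> L"
    and k: "k \<le> n" "0 < k \<Longrightarrow> real k \<le> (1 - insdel_rate_loss q \<gamma> \<kappa> - eps) * n + 1"
    and big: "2 * (M / (M - \<gamma>)) ^ Suc t * q ^ (t + 2) * real n ^ t \<le> q ^ n"
  shows "2 * card (UNIV :: 'a set) ^ n * card (bad_tuples n k (nat \<lfloor>\<gamma> * n\<rfloor>) (nat \<lfloor>\<kappa> * n\<rfloor>) L :: 'a list list set)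
    \<le> (card (UNIV :: 'a set) ^ n) ^ k"
proof -
  define I D where "I = nat \<lfloor>\<gamma> * n\<rfloor>" and "D = nat \<lfloor>\<kappa> * n\<rfloor>"
  define B where "B = (bad_tuples n k I D L :: 'a list list set)"
  have q3: "3 \<le> card (UNIV :: 'a set)"
    using q unfolding q_def by simp
  have "(q - 1) / q < 1"
    using q by simp
  then have "\<kappa> < 1"
    using \<kappa> by linarith
  then have K: "0 \<le> M / (M - \<gamma>)"
    using \<gamma> unfolding M_def by simp
  have ball: "card (insdel_ball r I D n) \<le> M / (M - \<gamma>) * q powr (n * insdel_rate_loss q \<gamma> \<kappa>)"
    for r :: "'a list"
    unfolding I_def D_def M_def using q \<gamma> \<kappa> by (intro card_insdel_ball_le_rate_loss) (auto simp: q_def)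
  have "2 * q ^ n * card B \<le> (q ^ n) ^ k"
  proof (cases "t \<le> k")
    case True
    have "real I \<le> \<gamma> * n"
      unfolding I_def using \<gamma> by (simp add: nat_floor_bounds)
    also have "\<dots> \<le> (q - 1) * n"
      using \<gamma> by (intro mult_right_mono) auto
    finally have "real I \<le> (q - 1) * n" .
    moreover have "0 < k"
      using True t(1) by simp
    ultimately have "2 * q ^ n * (q ^ Suc (n + I) * (q ^ k * (q ^ k) ^ t * real k ^ t)
        * ((M / (M - \<gamma>) * q powr (n * insdel_rate_loss q \<gamma> \<kappa>)) ^ Suc t * (q ^ n) ^ (k - t)))
        \<le> (q ^ n) ^ k"
      using True k t(2) K big by (intro bad_tuples_bound_arith[OF q]) auto
    moreover have "card B \<le> q ^ Suc (n + I) * (q ^ k * (q ^ k) ^ t * real k ^ t)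
        * ((M / (M - \<gamma>) * q powr (n * insdel_rate_loss q \<gamma> \<kappa>)) ^ Suc t * (q ^ n) ^ (k - t))"
      using q3 L ball unfolding B_def q_def by (intro card_bad_tuples_le_powers) auto
    ultimately show ?thesis
      using q by (smt (verit) mult_left_mono zero_le_power)
  next
    case False
    then have "B = {}"
      unfolding B_def using q3 L by (intro bad_tuples_empty) (auto simp: q_def)
    then show ?thesis
      using q by simp
  qed
  then have "real (2 * card (UNIV :: 'a set) ^ n * card B) \<le> real ((card (UNIV :: 'a set) ^ n) ^ k)"
    unfolding q_def by simp
  then show ?thesis
    unfolding B_def I_def D_def by (simp only: of_nat_le_iff)
qed

lemma list_size_exponent_bounds:
  fixes q eps :: real
  assumes q: "3 \<le> q" and eps: "0 < eps" "eps < 1"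
  defines "t \<equiv> nat \<lceil>(q + 3) / eps\<rceil>"
  shows "0 < t" "q + 3 \<le> real (t + 1) * eps" "q ^ t \<le> exp ((q + 4) * ln q / eps)"
proof -
  have pos: "0 < (q + 3) / eps"
    using q eps by simp
  then have t_ge: "(q + 3) / eps \<le> t" and t_le: "t \<le> (q + 3) / eps + 1"
    unfolding t_def using nat_ceiling_bounds[of "(q + 3) / eps"] by auto
  with pos show "0 < t"
    by simp
  show "q + 3 \<le> real (t + 1) * eps"
    using t_ge eps by (simp add: divide_le_eq algebra_simps)
  have "(q + 3) / eps + 1 \<le> (q + 4) / eps"
    using eps by (simp add: field_simps)
  then have "t * ln q \<le> (q + 4) / eps * ln q"
    using t_le q by (intro mult_right_mono) auto
  then show "q ^ t \<le> exp ((q + 4) * ln q / eps)"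
    using q by (simp add: power_eq_exp_ln)
qed

lemma random_linear_code_list_decodable_eventually:
  fixes \<gamma> \<kappa> eps :: real
  defines "q \<equiv> real (card (UNIV :: 'a::{field,finite} set))"
  assumes q: "3 \<le> q" and \<gamma>: "0 \<le> \<gamma>" "\<gamma> < q - 1" and \<kappa>: "0 \<le> \<kappa>" "\<kappa> < (q - 1) / q"
    and eps: "0 < eps" "eps < 1"
  shows "\<exists>N. \<forall>n\<ge>N. 1 - q powr (- real n)
    \<le> prob_random_linear_code n (nat \<lceil>(1 - insdel_rate_loss q \<gamma> \<kappa> - eps) * n\<rceil>)
        (\<lambda>C :: 'a list set. list_decodable_insdel C (\<gamma> * n) (\<kappa> * n) (exp ((q + 4) * ln q / eps)))"
proof -
  have q3: "3 \<le> card (UNIV :: 'a set)"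
    using q unfolding q_def by simp
  define M where "M = 2 * \<gamma> - \<kappa> + 1"
  define R where "R = 1 - insdel_rate_loss q \<gamma> \<kappa> - eps"
  define t where "t = nat \<lceil>(q + 3) / eps\<rceil>"
  have t: "0 < t" "q + 3 \<le> (t + 1) * eps" and L: "q ^ t \<le> exp ((q + 4) * ln q / eps)"
    unfolding t_def using q eps by (rule list_size_exponent_bounds)+
  have "\<forall>\<^sub>F n in sequentially. 2 * (M / (M - \<gamma>)) ^ Suc t * q ^ (t + 2) * real n ^ t \<le> q powr real n"
    using q by real_asymp
  then obtain N where big: "\<And>n. N \<le> n \<Longrightarrow> 2 * (M / (M - \<gamma>)) ^ Suc t * q ^ (t + 2) * real n ^ t \<le> q ^ n"
    using q by (auto simp: eventually_sequentially powr_realpow)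
  have "(q - 1) / q < 1"
    using q by simp
  then have "\<kappa> < 1"
    using \<kappa> by linarith
  then have "R \<le> 1"
    using insdel_rate_loss_nonneg[of q \<gamma> \<kappa>] q \<gamma> \<kappa> eps unfolding R_def by simp
  have k: "nat \<lceil>R * n\<rceil> \<le> n" "0 < nat \<lceil>R * n\<rceil> \<Longrightarrow> real (nat \<lceil>R * n\<rceil>) \<le> R * n + 1" for n
    using \<open>R \<le> 1\<close> mult_right_mono[of R 1 "real n"] nat_ceiling_bounds(2)[of "R * n"]
    by (auto simp: nat_le_iff ceiling_le_iff)
  show ?thesis
  proof (intro exI[of _ N] allI impI, fold R_def)
    fix n assume "N \<le> n"
    have "2 * card (UNIV :: 'a set) ^ n * card (bad_tuples n (nat \<lceil>R * n\<rceil>) (nat \<lfloor>\<gamma> * n\<rfloor>) (nat \<lfloor>\<kappa> * n\<rfloor>)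
        (exp ((q + 4) * ln q / eps)) :: 'a list list set) \<le> (card (UNIV :: 'a set) ^ n) ^ nat \<lceil>R * n\<rceil>"
      unfolding R_def
      by (intro card_bad_tuples_small[where 'a='a and \<gamma>=\<gamma> and \<kappa>=\<kappa> and t=t and eps=eps, folded q_def M_def]
          q \<gamma> \<kappa> t L big[OF \<open>N \<le> n\<close>] k[unfolded R_def])
    then show "1 - q powr (- real n) \<le> prob_random_linear_code n (nat \<lceil>R * n\<rceil>)
        (\<lambda>C :: 'a list set. list_decodable_insdel C (\<gamma> * n) (\<kappa> * n) (exp ((q + 4) * ln q / eps)))"
      by (rule prob_list_decodable_ge[where 'a='a, folded q_def, OF q3 \<gamma>(1) \<kappa>(1) k(1)])
  qed
qed

theorem mainTheorem9:
  fixes \<gamma> \<kappa> :: real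
  assumes q3: "card (UNIV :: 'a::{field,finite} set) \<ge> 3"
    and gam: "0 \<le> \<gamma>" "\<gamma> < real (card (UNIV :: 'a set)) - 1"
    and kap: "0 \<le> \<kappa>" "\<kappa> < (real (card (UNIV :: 'a set)) - 1) / real (card (UNIV :: 'a set))"
  shows "\<exists>C>0. \<forall>\<epsilon>::real. 0 < \<epsilon> \<and> \<epsilon> < 1 \<longrightarrow>
           (\<exists>N. \<forall>n\<ge>N.
             (let q = real (card (UNIV :: 'a set));
                  R = 1 - (2*\<gamma> - \<kappa> + 1) * Hq q (\<gamma> / (2*\<gamma> - \<kappa> + 1))
                        + \<gamma> * log q (q - 1) - Hq q \<kappa> - \<epsilon>;
                  k = nat \<lceil>R * real n\<rceil>
              in prob_random_linear_code n k
                   (\<lambda>Cd::'a list set. list_decodable_insdel Cd (\<gamma> * real n) (\<kappa> * real n) (exp (C / \<epsilon>)))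
                 \<ge> 1 - q powr (- real n)))"
proof -
  define q where "q = real (card (UNIV :: 'a set))"
  have q: "3 \<le> q"
    using q3 unfolding q_def by simp
  have rate: "1 - (2 * \<gamma> - \<kappa> + 1) * Hq q (\<gamma> / (2 * \<gamma> - \<kappa> + 1)) + \<gamma> * log q (q - 1) - Hq q \<kappa> - \<epsilon>
      = 1 - insdel_rate_loss q \<gamma> \<kappa> - \<epsilon>" for \<epsilon>
    by (simp add: insdel_rate_loss_def)
  have "\<exists>N. \<forall>n\<ge>N. 1 - q powr (- real n)
      \<le> prob_random_linear_code n (nat \<lceil>(1 - insdel_rate_loss q \<gamma> \<kappa> - \<epsilon>) * n\<rceil>)
          (\<lambda>C :: 'a list set. list_decodable_insdel C (\<gamma> * n) (\<kappa> * n) (exp ((q + 4) * ln q / \<epsilon>)))"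
    if "0 < \<epsilon> \<and> \<epsilon> < 1" for \<epsilon>
    using random_linear_code_list_decodable_eventually[where 'a='a, folded q_def, OF q gam[folded q_def] kap[folded q_def]]
      that by blast
  then show ?thesis
    using q unfolding Let_def q_def[symmetric] rate by (intro exI[of _ "(q + 4) * ln q"]) auto
qed

end
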